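(* Let $V\subseteq\mathbb{Z}^2$ be infinite and connected (in the nearest-neighbour lattice $(\mathbb{Z}^2,\mathcal{E}^2)$) with $\mathbb{Z}^2\setminus V$ also infinite and connected, let $E$ be the set of nearest-neighbour edges with both endpoints in $V$, and let $(v_i)_{i\in\mathbb{Z}}$ be the boundary vertex sequence of $V$ described in the context. Then for every $\omega\in[0,\infty)^E$ and every $x,y\in V$, the limit \[ B(x,y):=\lim_{n\to\infty} B_n(x,y),\qquad B_n(x,y)=\tau(x,v_n)-\tau(y,v_n),\] exists (as a real number).
   Context: The dual lattice has vertex set $\mathbb{Z}^2+(1/2,1/2)$ and edge set $\mathcal{E}^2+(1/2,1/2)$; the dual edge $e^*$ is the one bisecting $e\in\mathcal{E}^2$. For $V$ as in the claim there is a doubly infinite dual path $\Gamma=(e_i^* )_{i\in\mathbb{Z}}$ with no vertex self-intersections such that $(V,E)$ is one of the two components of the graph obtained from $(\mathbb{Z}^2,\mathcal{E}^2)$ by deleting the edges $e_i$ dual to the $e_i^*$; fix such a $\Gamma$ and its indexing, and let $v_i$ be the endpoint of $e_i$ lying in $V$ (a vertex may appear as $v_i$ for several $i$). For $\omega=(\omega_e)_{e\in E}\in[0,\infty)^E$, the passage time of a finite path $\gamma$ in $(V,E)$ is $\tau(\gamma)=\sum_{e\in\gamma}\omega_e$, and $\tau(x,y)=\inf\{\tau(\gamma):\gamma \text{ a path in }(V,E)\text{ from }x\text{ to }y\}$. *)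

theory Defs
  imports Complex_Main
begin

type_synonym vtx = "int \<times> int"

definition nn_adj :: "vtx \<Rightarrow> vtx \<Rightarrow> bool" where
  "nn_adj p q \<longleftrightarrow> \<bar>fst p - fst q\<bar> + \<bar>snd p - snd q\<bar> = 1"

definition nn_edges :: "vtx set set" where
  "nn_edges = {{p, q} | p q. nn_adj p q}"

definition is_path :: "(vtx \<Rightarrow> vtx \<Rightarrow> bool) \<Rightarrow> vtx set \<Rightarrow> vtx \<Rightarrow> vtx \<Rightarrow> vtx list \<Rightarrow> bool" where
  "is_path R S x y xs \<longleftrightarrow> xs \<noteq> [] \<and> hd xs = x \<and> last xs = y \<and> set xs \<subseteq> S \<and> successively R xs"

definition connected_in :: "(vtx \<Rightarrow> vtx \<Rightarrow> bool) \<Rightarrow> vtx set \<Rightarrow> bool" where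
  "connected_in R S \<longleftrightarrow> (\<forall>x\<in>S. \<forall>y\<in>S. \<exists>xs. is_path R S x y xs)"

definition is_component :: "(vtx \<Rightarrow> vtx \<Rightarrow> bool) \<Rightarrow> vtx set \<Rightarrow> bool" where
  "is_component R S \<longleftrightarrow> S \<noteq> {} \<and> connected_in R S \<and> (\<forall>x y. x \<in> S \<longrightarrow> R x y \<longrightarrow> y \<in> S)"

text \<open>Dual vertex (a,b) stands for the point (a+1/2, b+1/2).
  The primal edge bisected by the dual edge between dual vertices p and q.\<close>
definition primal_of_dual :: "vtx \<Rightarrow> vtx \<Rightarrow> vtx set" where
  "primal_of_dual p q =
     (if snd p = snd q then
        (let a = max (fst p) (fst q) in {(a, snd p), (a, snd p + 1)})
      else
        (let b = max (snd p) (snd q) in {(fst p, b), (fst p + 1, b)}))"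

definition dual_path :: "(int \<Rightarrow> vtx) \<Rightarrow> bool" where
  "dual_path w \<longleftrightarrow> inj w \<and> (\<forall>i. nn_adj (w i) (w (i + 1)))"

definition gamma_edge :: "(int \<Rightarrow> vtx) \<Rightarrow> int \<Rightarrow> vtx set" where
  "gamma_edge w i = primal_of_dual (w i) (w (i + 1))"

definition cut_adj :: "(int \<Rightarrow> vtx) \<Rightarrow> vtx \<Rightarrow> vtx \<Rightarrow> bool" where
  "cut_adj w p q \<longleftrightarrow> nn_adj p q \<and> {p, q} \<notin> range (gamma_edge w)"

definition edges_in :: "vtx set \<Rightarrow> vtx set set" where
  "edges_in V = {e \<in> nn_edges. e \<subseteq> V}"

definition path_time :: "(vtx set \<Rightarrow> real) \<Rightarrow> vtx list \<Rightarrow> real" where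
  "path_time \<omega> xs = sum_list (map2 (\<lambda>a b. \<omega> {a, b}) xs (tl xs))"

definition pass_time :: "vtx set \<Rightarrow> (vtx set \<Rightarrow> real) \<Rightarrow> vtx \<Rightarrow> vtx \<Rightarrow> real" where
  "pass_time V \<omega> x y = Inf {path_time \<omega> xs | xs. is_path nn_adj V x y xs}"

end

theory Submission
  imports Defs "HOL-Analysis.Analysis"
begin

text \<open>Write \<open>B\<^sub>n(z) = \<tau>(z, v\<^sub>n) - \<tau>(v\<^sub>0, v\<^sub>n)\<close>; it is bounded by the triangle inequality, and
  \<open>B\<^sub>n(x, y) = B\<^sub>n(x) - B\<^sub>n(y)\<close>. Let \<open>\<eta>\<^sub>m\<close> be a near-geodesic from \<open>v\<^sub>0\<close> to \<open>v\<^sub>m\<close>. Closing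
  \<open>\<eta>\<^sub>m\<close> up along \<open>\<Gamma>\<close> gives a Jordan curve that crosses each edge \<open>e\<^sub>n\<close>, \<open>0 < n < m\<close>,
  transversally; since the complement of \<open>V\<close> is connected, every path in \<open>V\<close> from \<open>v\<^sub>n\<close> to a
  later \<open>v\<^sub>j\<close>, \<open>j > m\<close>, must meet \<open>\<eta>\<^sub>m\<close>. Hence from any \<open>z\<close>, either all paths to later or all
  paths to earlier boundary vertices meet \<open>\<eta>\<^sub>m\<close>, and exchanging tails at the meeting point
  gives \<open>B\<^sub>m(z) \<le> B\<^sub>j(z) + \<epsilon>\<^sub>m\<close> for all \<open>j > m\<close>, or for all \<open>0 < j < m\<close>. A bounded
  sequence with this property converges.\<close>

section \<open>Nearest-neighbour edges as segments in the plane\<close>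

lemma nn_adj_commute: "nn_adj a b \<longleftrightarrow> nn_adj b a"
  unfolding nn_adj_def by (simp add: abs_minus_commute)

lemma nn_adj_iff:
  "nn_adj a b \<longleftrightarrow>
    b = (fst a + 1, snd a) \<or> b = (fst a - 1, snd a) \<or> b = (fst a, snd a + 1) \<or> b = (fst a, snd a - 1)"
  unfolding nn_adj_def by (cases a; cases b) auto

lemma nn_adj_imp_neq: "nn_adj a b \<Longrightarrow> a \<noteq> b"
  unfolding nn_adj_def by auto

lemma int_unit_interval_cases:
  assumes "of_int a \<le> (x::real)" "x \<le> of_int a + 1" "of_int c \<le> x" "x \<le> of_int c + 1"
  shows "c = a \<or> (c = a+1 \<and> x = of_int c) \<or> (c = a - 1 \<and> x = of_int a)"
proof -
  have "of_int c \<le> (of_int (a + 1)::real)" using assms by simp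
  hence 1: "c \<le> a + 1" by linarith
  have "of_int a \<le> (of_int (c + 1)::real)" using assms by simp
  hence 2: "a \<le> c + 1" by linarith
  show ?thesis
  proof (cases "c = a")
    case False
    with 1 2 have "c = a + 1 \<or> c = a - 1" by linarith
    then show ?thesis using assms by auto
  qed simp
qed

lemma int_in_unit_interval:
  assumes "of_int a \<le> (x::real)" "x \<le> of_int a + 1" "x = of_int c"
  shows "c = a \<or> c = a + 1"
proof -
  have "of_int a \<le> (of_int c::real)" "(of_int c::real) \<le> of_int (a+1)" using assms by auto
  hence "a \<le> c" "c \<le> a + 1" by linarith+
  thus ?thesis by linarith
qed

lemma one_le_abs_of_int_diff: "a \<noteq> c \<Longrightarrow> (1::real) \<le> \<bar>of_int a - of_int c\<bar>"
proof -
  assume "a \<noteq> c"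
  then have "1 \<le> \<bar>a - c\<bar>" by linarith
  then show ?thesis by (metis of_int_1 of_int_abs of_int_diff of_int_le_iff)
qed

lemma one_le_abs_of_int_minus:
  assumes "of_int s \<le> (x::real)" "x \<le> of_int s + 1" "p \<noteq> s" "p \<noteq> s + 1"
  shows "1 \<le> \<bar>of_int p - x\<bar>"
proof -
  have "p \<le> s - 1 \<or> s + 2 \<le> p" using assms(3,4) by linarith
  then have "of_int p \<le> (of_int s - 1::real) \<or> (of_int s + 2::real) \<le> of_int p"
    by (metis of_int_diff of_int_add of_int_le_iff of_int_1 one_add_one of_int_numeral)
  then show ?thesis using assms(1,2) by linarith
qed

definition lattice_step :: "vtx \<Rightarrow> bool \<Rightarrow> vtx" where
  "lattice_step a h = (if h then (fst a + 1, snd a) else (fst a, snd a + 1))"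

definition on_lattice_edge :: "vtx \<Rightarrow> bool \<Rightarrow> real \<Rightarrow> real \<Rightarrow> bool" where
  "on_lattice_edge a h x y \<longleftrightarrow> (if h then of_int (fst a) \<le> x \<and> x \<le> of_int (fst a) + 1 \<and> y = of_int (snd a)
      else of_int (snd a) \<le> y \<and> y \<le> of_int (snd a) + 1 \<and> x = of_int (fst a))"

lemma lattice_edges_meet_at_vertex:
  assumes "{a, lattice_step a h} \<noteq> {c, lattice_step c h'}" "on_lattice_edge a h x y" "on_lattice_edge c h' x y"
  shows "\<exists>p\<in>{a,lattice_step a h}\<inter>{c,lattice_step c h'}. x = of_int (fst p) \<and> y = of_int (snd p)"
proof -
  obtain a1 a2 c1 c2 where A: "a = (a1,a2)" "c = (c1,c2)" by fastforce
  show ?thesis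
  proof (cases h; cases h')
    assume h: h h'
    with assms have "y = of_int a2" "y = of_int c2" "of_int a1 \<le> x" "x \<le> of_int a1 + 1"
      "of_int c1 \<le> x" "x \<le> of_int c1 + 1" "a1 \<noteq> c1 \<or> a2 \<noteq> c2"
        by (auto simp: on_lattice_edge_def lattice_step_def A)
    moreover then have "a2 = c2" by simp
    ultimately show ?thesis using int_unit_interval_cases[of a1 x c1] h
      by (auto simp: lattice_step_def A)
  next
    assume h: "\<not>h" "\<not>h'"
    with assms have "x = of_int a1" "x = of_int c1" "of_int a2 \<le> y" "y \<le> of_int a2 + 1"
      "of_int c2 \<le> y" "y \<le> of_int c2 + 1" "a1 \<noteq> c1 \<or> a2 \<noteq> c2"
        by (auto simp: on_lattice_edge_def lattice_step_def A)
    moreover then have "a1 = c1" by simp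
    ultimately show ?thesis using int_unit_interval_cases[of a2 y c2] h
      by (auto simp: lattice_step_def A)
  next
    assume h: "h" "\<not>h'"
    with assms have "y = of_int a2" "x = of_int c1" "of_int a1 \<le> x" "x \<le> of_int a1 + 1"
      "of_int c2 \<le> y" "y \<le> of_int c2 + 1" by (auto simp: on_lattice_edge_def lattice_step_def A)
    then show ?thesis using int_in_unit_interval[of a1 x c1] int_in_unit_interval[of c2 y a2] h
      by (auto simp: lattice_step_def A)
  next
    assume h: "\<not>h" "h'"
    with assms have "x = of_int a1" "y = of_int c2" "of_int a2 \<le> y" "y \<le> of_int a2 + 1"
      "of_int c1 \<le> x" "x \<le> of_int c1 + 1" by (auto simp: on_lattice_edge_def lattice_step_def A)
    then show ?thesis using int_in_unit_interval[of a2 y c2] int_in_unit_interval[of c1 x a1] h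
      by (auto simp: lattice_step_def A)
  qed
qed

definition complex_of_vtx :: "vtx \<Rightarrow> complex" where
  "complex_of_vtx p = Complex (of_int (fst p)) (of_int (snd p))"

lemma complex_of_vtx_eq_iff: "complex_of_vtx p = complex_of_vtx q \<longleftrightarrow> p = q"
  by (cases p; cases q) (auto simp: complex_of_vtx_def complex_eq_iff)

lemma abs_coord_le_dist:
  "\<bar>of_int (fst p) - Re z\<bar> \<le> dist (complex_of_vtx p) z"
  "\<bar>of_int (snd p) - Im z\<bar> \<le> dist (complex_of_vtx p) z"
  using abs_Re_le_cmod[of "complex_of_vtx p - z"] abs_Im_le_cmod[of "complex_of_vtx p - z"]
  by (auto simp: dist_norm complex_of_vtx_def)

lemma nn_adj_lattice_stepE:
  assumes "nn_adj a b" obtains s h where "{a,b} = {s, lattice_step s h}"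
proof -
  obtain a1 a2 b1 b2 where A: "a = (a1,a2)" "b = (b1,b2)" by fastforce
  have "b = (a1+1,a2) \<or> b = (a1 - 1, a2) \<or> b = (a1, a2+1) \<or> b = (a1,a2 - 1)"
    using assms unfolding nn_adj_iff A by auto
  then show ?thesis
  proof (elim disjE)
    assume "b = (a1+1,a2)" thus ?thesis using that[of a True] by (auto simp: A lattice_step_def)
  next
    assume "b = (a1 - 1,a2)" thus ?thesis using that[of b True] by (auto simp: A lattice_step_def)
  next
    assume "b = (a1,a2+1)" thus ?thesis using that[of a False] by (auto simp: A lattice_step_def)
  next
    assume "b = (a1,a2 - 1)" thus ?thesis using that[of b False] by (auto simp: A lattice_step_def)
  qed
qed

lemma segment_on_lattice_edge:
  assumes "z \<in> closed_segment (complex_of_vtx s) (complex_of_vtx (lattice_step s h))"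
  shows "on_lattice_edge s h (Re z) (Im z)"
proof -
  obtain u where u: "0 \<le> u" "u \<le> 1" "z = (1 - u) *\<^sub>R complex_of_vtx s + u *\<^sub>R complex_of_vtx (lattice_step s h)"
    using assms unfolding in_segment by auto
  have R: "Re z = (1 - u) * of_int (fst s) + u * of_int (fst (lattice_step s h))"
    and I: "Im z = (1 - u) * of_int (snd s) + u * of_int (snd (lattice_step s h))"
    using u(3) by (simp_all add: complex_of_vtx_def)
  show ?thesis
  proof (cases h)
    case True
    have "Re z = of_int (fst s) + u" "Im z = of_int (snd s)" using R I True
      by (simp_all add: lattice_step_def left_diff_distrib distrib_left)
    then show ?thesis using u(1,2) True by (simp add: on_lattice_edge_def)
  next
    case False
    have "Im z = of_int (snd s) + u" "Re z = of_int (fst s)" using R I False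
      by (simp_all add: lattice_step_def left_diff_distrib distrib_left)
    then show ?thesis using u(1,2) False by (simp add: on_lattice_edge_def)
  qed
qed

lemma segment_lattice_step:
  assumes "{a,b} = {s, lattice_step s h}"
  shows "closed_segment (complex_of_vtx a) (complex_of_vtx b) =
    closed_segment (complex_of_vtx s) (complex_of_vtx (lattice_step s h))"
  using assms by (auto simp: doubleton_eq_iff closed_segment_commute)

lemma lattice_segments_meet_at_vertex:
  assumes "nn_adj a b" "nn_adj c d" "{a,b} \<noteq> {c,d}"
    "z \<in> closed_segment (complex_of_vtx a) (complex_of_vtx b)" "z \<in> closed_segment (complex_of_vtx c) (complex_of_vtx d)"
  shows "\<exists>p\<in>{a,b}\<inter>{c,d}. z = complex_of_vtx p"
proof -
  obtain s h where 1: "{a,b} = {s, lattice_step s h}" using nn_adj_lattice_stepE[OF assms(1)] .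
  obtain t h' where 2: "{c,d} = {t, lattice_step t h'}" using nn_adj_lattice_stepE[OF assms(2)] .
  have "on_lattice_edge s h (Re z) (Im z)" "on_lattice_edge t h' (Re z) (Im z)"
    using segment_on_lattice_edge assms(4,5) segment_lattice_step[OF 1] segment_lattice_step[OF 2]
      by auto
  from lattice_edges_meet_at_vertex[OF _ this] assms(3) 1 2 obtain p where
    "p\<in>{a,b}\<inter>{c,d}" "Re z = of_int (fst p)" "Im z = of_int (snd p)" by auto
  thus ?thesis by (auto simp: complex_of_vtx_def complex_eq_iff)
qed

lemma dist_vertex_lattice_segment:
  assumes "nn_adj a b" "p \<notin> {a,b}" "z \<in> closed_segment (complex_of_vtx a) (complex_of_vtx b)"
  shows "1 \<le> dist (complex_of_vtx p) z"
proof -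
  obtain s h where 1: "{a,b} = {s, lattice_step s h}" using nn_adj_lattice_stepE[OF assms(1)] .
  have "z \<in> closed_segment (complex_of_vtx s) (complex_of_vtx (lattice_step s h))"
    using assms(3) segment_lattice_step[OF 1] by simp
  from segment_on_lattice_edge[OF this] have H: "on_lattice_edge s h (Re z) (Im z)" .
  have p: "p \<noteq> s" "p \<noteq> lattice_step s h" using assms(2) 1 by auto
  note d = abs_coord_le_dist[of p z]
  show ?thesis
  proof (cases h)
    case True
    with H have h: "Im z = of_int (snd s)" "of_int (fst s) \<le> Re z" "Re z \<le> of_int (fst s) + 1"
      by (auto simp: on_lattice_edge_def)
    show ?thesis
    proof (cases "snd p = snd s")
      case True
      with p \<open>h\<close> have "fst p \<noteq> fst s" "fst p \<noteq> fst s + 1"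
        by (auto simp: lattice_step_def prod_eq_iff)
      then show ?thesis using one_le_abs_of_int_minus[OF h(2,3)] d(1) by fastforce
    next
      case False
      then show ?thesis using one_le_abs_of_int_diff[OF False] h(1) d(2) by simp
    qed
  next
    case False
    with H have h: "Re z = of_int (fst s)" "of_int (snd s) \<le> Im z" "Im z \<le> of_int (snd s) + 1"
      by (auto simp: on_lattice_edge_def)
    show ?thesis
    proof (cases "fst p = fst s")
      case True
      with p \<open>\<not> h\<close> have "snd p \<noteq> snd s" "snd p \<noteq> snd s + 1"
        by (auto simp: lattice_step_def prod_eq_iff)
      then show ?thesis using one_le_abs_of_int_minus[OF h(2,3)] d(2) by fastforce
    next
      case False
      then show ?thesis using one_le_abs_of_int_diff[OF False] h(1) d(1) by simp
    qed
  qed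
qed

lemma vertex_on_lattice_segment:
  assumes "nn_adj a b" "complex_of_vtx p \<in> closed_segment (complex_of_vtx a) (complex_of_vtx b)"
  shows "p \<in> {a,b}"
  using dist_vertex_lattice_segment[OF assms(1) _ assms(2)] by fastforce

lemma dist_distinct_vertices:
  assumes "p \<noteq> m" shows "1 \<le> dist (complex_of_vtx m) (complex_of_vtx p)"
proof -
  have "fst p \<noteq> fst m \<or> snd p \<noteq> snd m" using assms by (auto simp: prod_eq_iff)
  then show ?thesis
    using one_le_abs_of_int_diff abs_coord_le_dist[of p "complex_of_vtx m"]
    by (auto simp: complex_of_vtx_def dist_commute intro: order.trans)
qed

section \<open>Lattice polylines and polygons\<close>

fun polyline :: "vtx list \<Rightarrow> real \<Rightarrow> complex" where
  "polyline [] = linepath 0 0"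
| "polyline [p] = linepath (complex_of_vtx p) (complex_of_vtx p)"
| "polyline [p,q] = linepath (complex_of_vtx p) (complex_of_vtx q)"
| "polyline (p#q#r#rest) = linepath (complex_of_vtx p) (complex_of_vtx q) +++ polyline (q#r#rest)"

definition list_edges :: "vtx list \<Rightarrow> vtx set set" where
  "list_edges xs = (\<lambda>(a,b). {a,b}) ` set (zip xs (tl xs))"

lemma polyline_path:
  "xs \<noteq> [] \<Longrightarrow> path (polyline xs) \<and> pathstart (polyline xs) = complex_of_vtx (hd xs) \<and>
    pathfinish (polyline xs) = complex_of_vtx (last xs)"
  by (induction xs rule: polyline.induct) auto

lemma path_image_polyline:
  "xs \<noteq> [] \<Longrightarrow> path_image (polyline xs) =
    complex_of_vtx ` set xs \<union> (\<Union>(a,b)\<in>set (zip xs (tl xs)). closed_segment (complex_of_vtx a) (complex_of_vtx b))"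
proof (induction xs rule: polyline.induct)
  case (4 p q r rest)
  have "path_image (polyline (p#q#r#rest)) =
      closed_segment (complex_of_vtx p) (complex_of_vtx q) \<union> path_image (polyline (q#r#rest))"
    using polyline_path[of "q#r#rest"] by (simp add: path_image_join)
  also have "\<dots> = complex_of_vtx ` set (p#q#r#rest) \<union>
      (\<Union>(a,b)\<in>set (zip (p#q#r#rest) (tl (p#q#r#rest))). closed_segment (complex_of_vtx a) (complex_of_vtx b))"
    using "4.IH" by auto
  finally show ?case .
qed auto

lemma successively_zip_tl:
  "(a,b) \<in> set (zip xs (tl xs)) \<Longrightarrow> successively R xs \<Longrightarrow> R a b \<and> a \<in> set xs \<and> b \<in> set xs"
proof (induction xs rule: induct_list012)
  case (3 x y zs)
  then show ?case by auto
qed auto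

lemma zip_tl_mem: "(a,b) \<in> set (zip xs (tl xs)) \<Longrightarrow> a \<in> set xs \<and> b \<in> set xs"
  by (metis list.set_sel(2) set_zip_leftD set_zip_rightD tl_Nil zip_Nil)

lemma list_edges_subset: "E \<in> list_edges xs \<Longrightarrow> E \<subseteq> set xs"
  unfolding list_edges_def using zip_tl_mem by fastforce

lemma path_image_polylineE:
  assumes "xs \<noteq> []" "z \<in> path_image (polyline xs)"
  obtains p where "p \<in> set xs" "z = complex_of_vtx p"
  | a b where "(a,b) \<in> set (zip xs (tl xs))" "z \<in> closed_segment (complex_of_vtx a) (complex_of_vtx b)"
  using assms path_image_polyline by auto

lemma polyline_inter_subset:
  assumes "successively nn_adj xs" "successively nn_adj ys" "xs \<noteq> []" "ys \<noteq> []"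
    "list_edges xs \<inter> list_edges ys = {}"
  shows "path_image (polyline xs) \<inter> path_image (polyline ys) \<subseteq> complex_of_vtx ` (set xs \<inter> set ys)"
proof
  have vertex_on_edge: "complex_of_vtx p \<in> complex_of_vtx ` (set P \<inter> set Q)"
    if "p \<in> set P" "successively nn_adj Q" "(c, d) \<in> set (zip Q (tl Q))"
      "complex_of_vtx p \<in> closed_segment (complex_of_vtx c) (complex_of_vtx d)" for p c d P Q
  proof -
    have "nn_adj c d" "c \<in> set Q" "d \<in> set Q" using successively_zip_tl[OF that(3,2)] by auto
    then have "p \<in> set Q" using vertex_on_lattice_segment that(4) by blast
    then show ?thesis using that(1) by blast
  qed
  fix z assume z: "z \<in> path_image (polyline xs) \<inter> path_image (polyline ys)"
  show "z \<in> complex_of_vtx ` (set xs \<inter> set ys)"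
  proof (rule path_image_polylineE[OF assms(3), of z]; rule path_image_polylineE[OF assms(4), of z])
    fix p q assume "p \<in> set xs" "z = complex_of_vtx p" "q \<in> set ys" "z = complex_of_vtx q"
    then show ?thesis by (auto simp: complex_of_vtx_eq_iff)
  next
    fix p c d assume "p \<in> set xs" "z = complex_of_vtx p" "(c, d) \<in> set (zip ys (tl ys))"
      "z \<in> closed_segment (complex_of_vtx c) (complex_of_vtx d)"
    then show ?thesis using vertex_on_edge[of p xs ys] assms(2) by simp
  next
    fix a b q assume "q \<in> set ys" "z = complex_of_vtx q" "(a, b) \<in> set (zip xs (tl xs))"
      "z \<in> closed_segment (complex_of_vtx a) (complex_of_vtx b)"
    then show ?thesis using vertex_on_edge[of q ys xs] assms(1) by (simp add: Int_commute)
  next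
    fix a b c d assume ab: "(a, b) \<in> set (zip xs (tl xs))" "z \<in> closed_segment (complex_of_vtx a) (complex_of_vtx b)"
      and cd: "(c, d) \<in> set (zip ys (tl ys))" "z \<in> closed_segment (complex_of_vtx c) (complex_of_vtx d)"
    have "{a, b} \<in> list_edges xs" "{c, d} \<in> list_edges ys"
      using ab cd unfolding list_edges_def by force+
    then have ne: "{a, b} \<noteq> {c, d}" using assms(5) by auto
    have "nn_adj a b" "a \<in> set xs" "b \<in> set xs" using successively_zip_tl[OF ab(1) assms(1)] by auto
    moreover have "nn_adj c d" "c \<in> set ys" "d \<in> set ys"
      using successively_zip_tl[OF cd(1) assms(2)] by auto
    ultimately obtain p where "p \<in> {a, b} \<inter> {c, d}" "z = complex_of_vtx p"
      using lattice_segments_meet_at_vertex[OF _ _ ne ab(2) cd(2)] by auto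
    then show ?thesis using \<open>a \<in> set xs\<close> \<open>b \<in> set xs\<close> \<open>c \<in> set ys\<close> \<open>d \<in> set ys\<close> by auto
  qed (use z in auto)
qed

lemma polyline_inter_subset_single:
  assumes "successively nn_adj xs" "successively nn_adj ys" "xs \<noteq> []" "ys \<noteq> []"
    "set xs \<inter> set ys \<subseteq> {m}"
  shows "path_image (polyline xs) \<inter> path_image (polyline ys) \<subseteq> complex_of_vtx ` (set xs \<inter> set ys)"
proof (rule polyline_inter_subset[OF assms(1-4)])
  show "list_edges xs \<inter> list_edges ys = {}"
  proof (rule ccontr)
    assume "list_edges xs \<inter> list_edges ys \<noteq> {}"
    then obtain E where E: "E \<in> list_edges xs" "E \<in> list_edges ys" by blast
    then obtain a b where ab: "(a,b) \<in> set (zip xs (tl xs))" "E = {a,b}"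
      unfolding list_edges_def by auto
    have "a \<noteq> b" using successively_zip_tl[OF ab(1) assms(1)] nn_adj_imp_neq by blast
    moreover have "E \<subseteq> {m}" using list_edges_subset[OF E(1)] list_edges_subset[OF E(2)] assms(5)
      by blast
    ultimately show False using ab(2) by auto
  qed
qed

lemma arc_polyline:
  "distinct xs \<Longrightarrow> 2 \<le> length xs \<Longrightarrow> successively nn_adj xs \<Longrightarrow> arc (polyline xs)"
proof (induction xs rule: polyline.induct)
  case (3 p q)
  then have "complex_of_vtx p \<noteq> complex_of_vtx q" by (simp add: complex_of_vtx_eq_iff)
  then show ?case by simp
next
  case (4 p q r rest)
  have arc2: "arc (polyline (q#r#rest))" using 4 by simp
  have pq: "complex_of_vtx p \<noteq> complex_of_vtx q" "nn_adj p q"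
    using 4 by (simp_all add: complex_of_vtx_eq_iff)
  have pn: "p \<notin> set (q#r#rest)" using "4.prems"(1) by simp
  have E: "list_edges [p,q] \<inter> list_edges (q#r#rest) = {}"
  proof -
    have "{p,q} \<notin> list_edges (q#r#rest)"
    proof
      assume "{p,q} \<in> list_edges (q#r#rest)"
      then have "p \<in> set (q#r#rest)" using list_edges_subset by blast
      thus False using pn by simp
    qed
    thus ?thesis by (simp add: list_edges_def)
  qed
  have s1: "successively nn_adj [p,q]" using pq by simp
  have s2: "successively nn_adj (q#r#rest)" using "4.prems"(3) by simp
  have "path_image (polyline [p,q]) \<inter> path_image (polyline (q#r#rest)) \<subseteq> complex_of_vtx ` (set [p,q] \<inter> set (q#r#rest))"
    by (rule polyline_inter_subset[OF s1 s2 _ _ E]) simp_all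
  also have "\<dots> \<subseteq> {complex_of_vtx q}" using pn by auto
  finally have I: "path_image (linepath (complex_of_vtx p) (complex_of_vtx q)) \<inter> path_image (polyline (q#r#rest)) \<subseteq> {pathstart (polyline (q#r#rest))}"
    using polyline_path[of "q#r#rest"] by simp
  have a1: "arc (linepath (complex_of_vtx p) (complex_of_vtx q))" using pq(1) by simp
  have "arc (linepath (complex_of_vtx p) (complex_of_vtx q) +++ polyline (q#r#rest))"
    by (rule arc_join[OF a1 arc2 _ I]) (use polyline_path[of "q#r#rest"] in simp)
  then show ?case by simp
qed simp_all

lemma zip_tl_snoc: "xs \<noteq> [] \<Longrightarrow> set (zip (xs @ [y]) (tl (xs @ [y]))) = set (zip xs (tl xs)) \<union> {(last xs, y)}"
proof (induction xs rule: induct_list012)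
  case (3 x1 x2 zs)
  then show ?case by auto
qed auto

lemma path_image_polyline_snoc:
  assumes "xs \<noteq> []"
  shows "path_image (polyline (xs @ [y])) =
    path_image (polyline xs) \<union> closed_segment (complex_of_vtx (last xs)) (complex_of_vtx y)"
proof -
  have "path_image (polyline (xs @ [y])) = complex_of_vtx ` set (xs @ [y]) \<union>
      (\<Union>(a,b)\<in>set (zip (xs@[y]) (tl (xs@[y]))). closed_segment (complex_of_vtx a) (complex_of_vtx b))"
    by (rule path_image_polyline) simp
  also have "\<dots> = complex_of_vtx ` set xs \<union>
      (\<Union>(a,b)\<in>set (zip xs (tl xs)). closed_segment (complex_of_vtx a) (complex_of_vtx b)) \<union>
      closed_segment (complex_of_vtx (last xs)) (complex_of_vtx y)"
    using zip_tl_snoc[OF assms, of y] by auto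
  also have "\<dots> = path_image (polyline xs) \<union> closed_segment (complex_of_vtx (last xs)) (complex_of_vtx y)"
    using path_image_polyline[OF assms] by simp
  finally show ?thesis .
qed

lemma zip_tl_middle: "(a,b) \<in> set (zip (ys @ [a,b] @ zs) (tl (ys @ [a,b] @ zs)))"
proof (induction ys)
  case Nil
  then show ?case by simp
next
  case (Cons y ys)
  then show ?case by (cases ys) auto
qed

lemma segment_subset_polyline:
  assumes "xs = ys @ [a,b] @ zs"
  shows "closed_segment (complex_of_vtx a) (complex_of_vtx b) \<subseteq> path_image (polyline xs)"
proof -
  have "xs \<noteq> []" using assms by simp
  have "(a,b) \<in> set (zip xs (tl xs))" using zip_tl_middle[of a b ys zs] assms by simp
  then show ?thesis using path_image_polyline[OF \<open>xs \<noteq> []\<close>] by fastforce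
qed

lemma list_edges_at_vertex:
  assumes "distinct xs" "xs = ys @ [a, m, b] @ zs" "(c,d) \<in> set (zip xs (tl xs))" "m \<in> {c,d}"
  shows "{c,d} = {a,m} \<or> {c,d} = {m,b}"
proof -
  from assms(3) obtain i where i: "i < min (length xs) (length (tl xs))" "c = xs ! i" "d = tl xs ! i"
    by (auto simp: set_zip)
  have n: "i + 1 < length xs" using i(1) by simp
  have d: "d = xs ! (i+1)" using i(3) n by (simp add: nth_tl)
  let ?k = "length ys"
  have L: "?k + 2 < length xs" using assms(2) by simp
  have xa: "xs ! ?k = a" and xm: "xs ! (?k+1) = m" and xb: "xs ! (?k+2) = b"
    using assms(2) by (auto simp: nth_append)
  have D: "\<And>j k. j < length xs \<Longrightarrow> k < length xs \<Longrightarrow> xs ! j = xs ! k \<longleftrightarrow> j = k"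
    using assms(1) nth_eq_iff_index_eq by blast
  have il: "i < length xs" using n by simp
  from assms(4) have "m = c \<or> m = d" by simp
  then show ?thesis
  proof
    assume mc: "m = c"
    have "xs ! i = xs ! (?k+1)" using i(2) xm mc by simp
    then have "i = ?k + 1" using D[OF il, of "?k+1"] L by simp
    then have "d = b" using d xb by simp
    then show ?thesis using mc by simp
  next
    assume md: "m = d"
    have "xs ! (i+1) = xs ! (?k+1)" using d xm md by simp
    then have "i + 1 = ?k + 1" using D[OF n, of "?k+1"] L by simp
    then have "c = a" using i(2) xa by simp
    then show ?thesis using md by simp
  qed
qed

lemma hd_last_notin_list_edges:
  assumes "distinct xs" "3 \<le> length xs"
  shows "{hd xs, last xs} \<notin> list_edges xs"
proof
  assume "{hd xs, last xs} \<in> list_edges xs"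
  then obtain e where e: "e \<in> set (zip xs (tl xs))" "{hd xs, last xs} = (case e of (a,b) \<Rightarrow> {a,b})"
    unfolding list_edges_def by (rule imageE) simp
  obtain a b where ab: "e = (a,b)" by (cases e)
  from e ab obtain i where i: "i < min (length xs) (length (tl xs))" "a = xs ! i" "b = tl xs ! i"
    by (auto simp: set_zip)
  have n: "i + 1 < length xs" using i(1) by simp
  have b: "b = xs ! (i+1)" using i(3) n by (simp add: nth_tl)
  have ne: "xs \<noteq> []" using assms(2) by auto
  have hd: "hd xs = xs ! 0" and lst: "last xs = xs ! (length xs - 1)"
    using hd_conv_nth[OF ne] last_conv_nth[OF ne] by auto
  have eq: "{xs ! 0, xs ! (length xs - 1)} = {xs ! i, xs ! (i+1)}"
    using e(2) ab i(2) b hd lst by simp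
  have D: "\<And>j k. j < length xs \<Longrightarrow> k < length xs \<Longrightarrow> xs ! j = xs ! k \<longleftrightarrow> j = k"
    using assms(1) nth_eq_iff_index_eq by blast
  have L: "length xs - 1 < length xs" "0 < length xs" using assms(2) by auto
  from eq consider "xs ! 0 = xs ! i" "xs ! (length xs - 1) = xs ! (i+1)"
    | "xs ! 0 = xs ! (i+1)" "xs ! (length xs - 1) = xs ! i" by (auto simp: doubleton_eq_iff)
  then show False
  proof cases
    case 1
    then have "0 = i" "length xs - 1 = i + 1" using D[OF L(2), of i] D[OF L(1), of "i+1"] n by auto
    then show False using assms(2) by simp
  next
    case 2
    then have "0 = i + 1" using D[OF L(2), of "i+1"] n by auto
    then show False by simp
  qed
qed

definition polygon :: "vtx list \<Rightarrow> real \<Rightarrow> complex" where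
  "polygon xs = polyline xs +++ linepath (complex_of_vtx (last xs)) (complex_of_vtx (hd xs))"

lemma simple_loop_polygon:
  assumes "distinct xs" "3 \<le> length xs" "successively nn_adj xs" "nn_adj (last xs) (hd xs)"
  shows "simple_path (polygon xs)" "pathfinish (polygon xs) = pathstart (polygon xs)"
proof -
  have ne: "xs \<noteq> []" using assms(2) by auto
  have P: "path (polyline xs)" "pathstart (polyline xs) = complex_of_vtx (hd xs)" "pathfinish (polyline xs) = complex_of_vtx (last xs)"
    using polyline_path[OF ne] by auto
  have hl: "hd xs \<noteq> last xs"
  proof -
    have "hd xs = xs ! 0" "last xs = xs ! (length xs - 1)"
      using hd_conv_nth[OF ne] last_conv_nth[OF ne] by auto
    moreover have "xs ! 0 \<noteq> xs ! (length xs - 1)"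
      using assms(2) nth_eq_iff_index_eq[OF assms(1), of 0 "length xs - 1"] ne by simp
    ultimately show ?thesis by simp
  qed
  have a1: "arc (polyline xs)" using arc_polyline assms by simp
  have a2: "arc (linepath (complex_of_vtx (last xs)) (complex_of_vtx (hd xs)))"
    using hl by (simp add: complex_of_vtx_eq_iff)
  have E: "list_edges xs \<inter> list_edges [last xs, hd xs] = {}"
    using hd_last_notin_list_edges[OF assms(1,2)] by (auto simp: list_edges_def insert_commute)
  have "path_image (polyline xs) \<inter> path_image (polyline [last xs, hd xs]) \<subseteq> complex_of_vtx ` (set xs \<inter> set [last xs, hd xs])"
    by (rule polyline_inter_subset[OF assms(3) _ ne _ E]) (use assms(4) in simp_all)
  also have "\<dots> \<subseteq> {complex_of_vtx (hd xs), complex_of_vtx (last xs)}" by auto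
  finally have I: "path_image (polyline xs) \<inter> path_image (linepath (complex_of_vtx (last xs)) (complex_of_vtx (hd xs))) \<subseteq>
     {pathstart (polyline xs), pathstart (linepath (complex_of_vtx (last xs)) (complex_of_vtx (hd xs)))}" using P by simp
  show "simple_path (polygon xs)" unfolding polygon_def
    by (rule simple_path_join_loop[OF a1 a2 _ _ I]) (use P in simp_all)
  show "pathfinish (polygon xs) = pathstart (polygon xs)" unfolding polygon_def using P by simp
qed

lemma path_image_polygon:
  "xs \<noteq> [] \<Longrightarrow> path_image (polygon xs) = path_image (polyline (xs @ [hd xs]))"
  unfolding polygon_def using polyline_path[of xs]
  by (simp add: path_image_join path_image_polyline_snoc)

lemma polygon_near_vertex:
  assumes "distinct xs" "successively nn_adj xs" "nn_adj (last xs) (hd xs)" "xs = ys @ [a, m, b] @ zs"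
    "z \<in> path_image (polyline (xs @ [hd xs]))" "dist (complex_of_vtx m) z < 1"
  shows "z \<in> closed_segment (complex_of_vtx a) (complex_of_vtx m) \<union> closed_segment (complex_of_vtx m) (complex_of_vtx b)"
proof -
  have ne: "xs @ [hd xs] \<noteq> []" by simp
  have sx: "successively nn_adj (xs @ [hd xs])" using assms(2,3)
    by (cases xs rule: rev_cases) (auto simp: successively_append_iff)
  have hd: "hd xs \<noteq> m" and lst: "last xs \<noteq> m"
  proof -
    have "hd xs = hd (ys @ [a,m,b] @ zs)" using assms(4) by simp
    moreover have "m \<in> set (tl (ys @ [a,m,b] @ zs))" by (cases ys) auto
    moreover have "distinct (ys @ [a,m,b] @ zs)" using assms(1,4) by simp
    ultimately show "hd xs \<noteq> m" by (cases ys) auto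
    have "last xs = last (ys @ [a,m,b] @ zs)" using assms(4) by simp
    moreover have "m \<in> set (butlast (ys @ [a,m,b] @ zs))"
      by (cases zs rule: rev_cases) (auto simp: butlast_append)
    moreover have "distinct (ys @ [a,m,b] @ zs)" using assms(1,4) by simp
    ultimately show "last xs \<noteq> m"
      by (metis append_butlast_last_id append_is_Nil_conv distinct_append disjoint_iff list.distinct(1) list.set_intros(1))
  qed
  show ?thesis
  proof (rule path_image_polylineE[OF ne assms(5)])
    fix p assume p: "p \<in> set (xs @ [hd xs])" "z = complex_of_vtx p"
    have "p = m" using dist_distinct_vertices[of p m] p(2) assms(6) by force
    then show ?thesis using p(2) by simp
  next
    fix c d assume cd: "(c,d) \<in> set (zip (xs @ [hd xs]) (tl (xs @ [hd xs])))" "z \<in> closed_segment (complex_of_vtx c) (complex_of_vtx d)"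
    have adj: "nn_adj c d" using successively_zip_tl[OF cd(1) sx] by simp
    have m: "m \<in> {c,d}" using dist_vertex_lattice_segment[OF adj _ cd(2), of m] assms(6) by force
    have xne: "xs \<noteq> []" using assms(4) by simp
    have "(c,d) \<in> set (zip xs (tl xs)) \<or> (c,d) = (last xs, hd xs)"
      using cd(1) zip_tl_snoc[OF xne] by auto
    then have "(c,d) \<in> set (zip xs (tl xs))" using m hd lst by auto
    from list_edges_at_vertex[OF assms(1,4) this m] have "{c,d} = {a,m} \<or> {c,d} = {m,b}" .
    then show ?thesis using cd(2) by (auto simp: doubleton_eq_iff closed_segment_commute)
  qed
qed

lemma polyline_inter_polygon:
  assumes X: "successively nn_adj X" "nn_adj (last X) (hd X)" "X \<noteq> []"
    and L: "successively nn_adj L" "L \<noteq> []" "set L \<inter> set X \<subseteq> {m}"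
  shows "path_image (polyline L) \<inter> path_image (polygon X) \<subseteq> complex_of_vtx ` (set L \<inter> set X)"
proof -
  have "successively nn_adj (X @ [hd X])" "set (X @ [hd X]) = set X"
    using X by (auto simp: successively_append_iff)
  then show ?thesis
    using polyline_inter_subset_single[OF L(1) _ L(2), of "X @ [hd X]" m] L(3)
    by (simp add: path_image_polygon[OF X(3)])
qed

lemma polyline_avoiding_polygon_connected:
  assumes X: "successively nn_adj X" "nn_adj (last X) (hd X)" "X \<noteq> []"
    and L: "successively nn_adj L" "L \<noteq> []" "set L \<inter> set X = {}"
  shows "connected_component (- path_image (polygon X)) (complex_of_vtx (hd L)) (complex_of_vtx (last L))"
proof -
  have "path_image (polyline L) \<subseteq> - path_image (polygon X)"
    using polyline_inter_polygon[OF X L(1,2), of "hd L"] L(3) by auto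
  then show ?thesis
    using polyline_path[OF L(2)]
    by (intro connected_componentI[of "path_image (polyline L)"])
       (auto simp: connected_path_image, metis pathstart_in_path_image, metis pathfinish_in_path_image)
qed

lemma segment_to_polygon_vertex:
  assumes X: "successively nn_adj X" "nn_adj (last X) (hd X)" "X \<noteq> []"
    and p: "nn_adj p m" "p \<notin> set X"
  shows "closed_segment (complex_of_vtx p) (complex_of_vtx m) \<inter> path_image (polygon X) \<subseteq> {complex_of_vtx m}"
proof -
  have "path_image (polyline [p, m]) \<inter> path_image (polygon X) \<subseteq> complex_of_vtx ` (set [p, m] \<inter> set X)"
    using polyline_inter_polygon[OF X, of "[p, m]" m] p by auto
  also have "\<dots> \<subseteq> {complex_of_vtx m}" using p(2) by auto
  finally show ?thesis by simp
qed

lemma inner_segment_orthogonal: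
  fixes M g f :: complex
  assumes "z \<in> closed_segment M (M + g)" "inner f g = 0"
  shows "inner f (z - M) = 0"
proof -
  obtain u where u: "z = (1 - u) *\<^sub>R M + u *\<^sub>R (M + g)" using assms(1) unfolding in_segment by auto
  have "z - M = u *\<^sub>R g" using u by (simp add: algebra_simps)
  then show ?thesis using assms(2) by (simp add: inner_scaleR_right)
qed

lemma inner_mult_ii_self: "inner f (\<i> * f) = 0"
  by (simp add: inner_complex_def)

lemma orthogonal_line_subset:
  fixes M f :: complex and S :: "complex set"
  assumes "norm f = 1" "closed_segment M (M + \<i>*f) \<subseteq> S" "closed_segment M (M - \<i>*f) \<subseteq> S"
    and d: "dist M z < 1" and i: "inner f (z - M) = 0"
  shows "z \<in> S"
proof -
  define w where "w = cnj f * (z - M)"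
  have fc: "f * cnj f = 1" using assms(1) by (simp add: complex_norm_square[symmetric])
  have zw: "z - M = f * w" unfolding w_def using fc by (simp add: algebra_simps)
  have Rw: "Re w = 0" using i unfolding w_def by (simp add: inner_complex_def)
  have w: "w = \<i> * of_real (Im w)" using Rw by (simp add: complex_eq_iff)
  have "norm (z - M) = norm w" using zw assms(1) by (simp add: norm_mult)
  hence nw: "norm w < 1" using d by (simp add: dist_norm norm_minus_commute)
  have aI: "\<bar>Im w\<bar> < 1" using abs_Im_le_cmod[of w] nw by linarith
  show "z \<in> S"
  proof (cases "Im w \<ge> 0")
    case True
    have "z = (1 - Im w) *\<^sub>R M + Im w *\<^sub>R (M + \<i> * f)"
      using zw w by (simp add: scaleR_conv_of_real algebra_simps)
    hence "z \<in> closed_segment M (M + \<i>*f)" unfolding in_segment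
      using True aI by (intro exI[of _ "Im w"]) auto
    thus ?thesis using assms(2) by blast
  next
    case False
    have "z = (1 + Im w) *\<^sub>R M + (- Im w) *\<^sub>R (M - \<i> * f)"
      using zw w by (simp add: scaleR_conv_of_real algebra_simps)
    hence "z \<in> closed_segment M (M - \<i>*f)" unfolding in_segment
      using False aI by (intro exI[of _ "- Im w"]) auto
    thus ?thesis using assms(3) by blast
  qed
qed

lemma polygon_straight_near_vertex:
  assumes X: "distinct X" "successively nn_adj X" "nn_adj (last X) (hd X)"
    and split: "X = ys @ [a, m, b] @ zs"
    and nf: "norm f = 1"
    and ends: "{complex_of_vtx a, complex_of_vtx b} =
      {complex_of_vtx m + \<i> * f, complex_of_vtx m - \<i> * f}"
    and z: "dist (complex_of_vtx m) z < 1"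
  shows "z \<in> path_image (polygon X) \<longleftrightarrow> inner f (z - complex_of_vtx m) = 0"
proof -
  let ?M = "complex_of_vtx m"
  have Xne: "X \<noteq> []" using split by simp
  have S: "path_image (polygon X) = path_image (polyline (X @ [hd X]))"
    by (rule path_image_polygon[OF Xne])
  have "closed_segment ?M (complex_of_vtx a) \<subseteq> path_image (polygon X)"
    "closed_segment ?M (complex_of_vtx b) \<subseteq> path_image (polygon X)"
    using segment_subset_polyline[of X ys a m "b # zs"] segment_subset_polyline[of X "ys @ [a]" m b zs]
      split path_image_polyline_snoc[OF Xne] unfolding S by (auto simp: closed_segment_commute)
  then have "closed_segment ?M (?M + \<i> * f) \<subseteq> path_image (polygon X)"
    "closed_segment ?M (?M - \<i> * f) \<subseteq> path_image (polygon X)"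
    using ends by (auto simp: doubleton_eq_iff)
  moreover have "inner f (z - ?M) = 0" if "z \<in> path_image (polygon X)"
  proof -
    have "z \<in> closed_segment ?M (?M + \<i> * f) \<or> z \<in> closed_segment ?M (?M + - (\<i> * f))"
      using polygon_near_vertex[OF X split, of z] that z ends unfolding S
      by (auto simp: closed_segment_commute doubleton_eq_iff)
    then show ?thesis
      using inner_segment_orthogonal[of z ?M "\<i> * f" f] inner_segment_orthogonal[of z ?M "- (\<i> * f)" f]
      by (auto simp: inner_mult_ii_self inner_minus_right)
  qed
  ultimately show ?thesis using orthogonal_line_subset[OF nf _ _ z] by blast
qed

section \<open>A Jordan curve crossed transversally\<close>

lemma half_disc_connected:
  fixes S :: "complex set" and M f z :: complex
  assumes nf: "norm f = 1"
    and off: "\<And>s. s \<in> S \<Longrightarrow> dist M s < 1 \<Longrightarrow> inner f (s - M) = 0"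
    and seg: "closed_segment (M + f) M \<inter> S \<subseteq> {M}"
    and z: "z \<in> ball M 1" "inner f z > inner f M"
  shows "connected_component (-S) (M + f) z"
proof -
  let ?H = "ball M 1 \<inter> {z. inner f z > inner f M}"
  let ?T = "closed_segment (M + f) (M + f /\<^sub>R 2)"
  have ff: "inner f f = 1" using nf by (simp add: power2_norm_eq_inner[symmetric])
  have mid: "M + f /\<^sub>R 2 \<in> ?H"
    using ff nf by (simp add: dist_norm inner_add_right)
  have HS: "?H \<inter> S = {}"
  proof -
    have False if "y \<in> ?H" "y \<in> S" for y
      using off[OF that(2)] that(1) by (simp add: inner_diff_right)
    then show ?thesis by blast
  qed
  have TS: "?T \<inter> S = {}"
  proof -
    have "midpoint (M + f) M = M + f /\<^sub>R 2"
      by (simp add: midpoint_def scaleR_conv_of_real field_simps)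
    then have "?T \<subseteq> closed_segment (M + f) M"
      by (metis midpoint_in_closed_segment subset_closed_segment ends_in_segment(1))
    moreover have "M \<notin> ?T"
    proof
      assume "M \<in> ?T"
      then obtain t where t: "0 \<le> t" "t \<le> 1" "M = (1 - t) *\<^sub>R (M + f) + t *\<^sub>R (M + f /\<^sub>R 2)"
        unfolding in_segment by auto
      then have "(1 - t/2) *\<^sub>R f = 0" by (simp add: scaleR_conv_of_real field_simps)
      with nf t show False by auto
    qed
    ultimately show ?thesis using seg by blast
  qed
  have "connected ?H" by (rule convex_connected) (simp add: convex_Int convex_halfspace_gt)
  moreover have "connected ?T" by (simp add: convex_connected)
  ultimately have "connected (?H \<union> ?T)" using mid by (intro connected_Un) auto
  moreover have "?H \<union> ?T \<subseteq> -S" using HS TS by blast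
  ultimately show ?thesis
    using z by (intro connected_componentI[of "?H \<union> ?T"]) auto
qed

text \<open>If \<open>M + f\<close> and \<open>M - f\<close> were connected, both open half-discs would lie in one
  component of the complement; but \<open>M\<close> is in the frontier of both the inside and the outside.\<close>
lemma crossing_loop_not_connected:
  fixes c :: "real \<Rightarrow> complex" and M f :: complex
  assumes sp: "simple_path c" "pathfinish c = pathstart c"
    and nf: "norm f = 1"
    and line: "\<And>z. dist M z < 1 \<Longrightarrow> z \<in> path_image c \<longleftrightarrow> inner f (z - M) = 0"
    and seg: "closed_segment (M + f) M \<inter> path_image c \<subseteq> {M}"
      "closed_segment (M - f) M \<inter> path_image c \<subseteq> {M}"
  shows "\<not> connected_component (- path_image c) (M + f) (M - f)"
proof
  let ?S = "path_image c"
  assume cc: "connected_component (-?S) (M + f) (M - f)"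
  have off: "inner f (z - M) = 0" if "z \<in> ?S" "dist M z < 1" for z
    using line that by blast
  have J: "inside ?S \<noteq> {}" "frontier (inside ?S) = ?S" "frontier (outside ?S) = ?S"
    using Jordan_inside_outside[OF sp] by simp_all
  have in_comp: "connected_component (-?S) (M + f) y" if "y \<notin> ?S" "dist y M < 1" for y
  proof (cases "inner f y > inner f M")
    case True
    then show ?thesis using half_disc_connected[OF nf off seg(1)] that by (simp add: dist_commute)
  next
    case False
    have "inner f (y - M) \<noteq> 0" using line that by (simp add: dist_commute)
    with False have "inner (-f) y > inner (-f) M" by (auto simp: inner_diff_right)
    then have "connected_component (-?S) (M + -f) y"
      using half_disc_connected[of "-f" ?S M] nf off seg(2) that by (simp add: dist_commute)
    then show ?thesis using cc connected_component_trans by auto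
  qed
  have near: "\<exists>y\<in>A. dist y M < 1" if "frontier A = ?S" for A :: "complex set"
  proof -
    have "M \<in> ?S" using line[of M] by simp
    then have "M \<in> closure A" using that frontier_closures by blast
    then show ?thesis using closure_approachable by (metis zero_less_one)
  qed
  obtain y1 where y1: "y1 \<in> inside ?S" "dist y1 M < 1" using near[OF J(2)] by blast
  obtain y2 where y2: "y2 \<in> outside ?S" "dist y2 M < 1" using near[OF J(3)] by blast
  have "y1 \<notin> ?S" "y2 \<notin> ?S" using y1(1) y2(1) inside_no_overlap outside_no_overlap by blast+
  then have "connected_component (-?S) y1 (M + f)" "connected_component (-?S) y2 (M + f)"
    using in_comp y1(2) y2(2) connected_component_sym by blast+
  then have "M + f \<in> inside ?S" "M + f \<in> outside ?S"
    using inside_same_component y1(1) outside_same_component y2(1) by blast+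
  then show False using inside_Int_outside by blast
qed

section \<open>The doubled lattice\<close>

text \<open>In the lattice scaled by 2, a vertex \<open>p\<close> sits at \<open>dbl p\<close>, the midpoint of the edge
  \<open>{p, q}\<close> at \<open>edge_mid p q\<close> and the dual vertex \<open>d\<close> (standing for \<open>d + (1/2, 1/2)\<close>) at
  \<open>dual_dbl d\<close>; all three kinds of points are lattice points and edges of both lattices
  become paths of length 2.\<close>

definition dbl :: "vtx \<Rightarrow> vtx" where "dbl p = (2 * fst p, 2 * snd p)"

definition edge_mid :: "vtx \<Rightarrow> vtx \<Rightarrow> vtx" where "edge_mid p q = (fst p + fst q, snd p + snd q)"

definition dual_dbl :: "vtx \<Rightarrow> vtx" where "dual_dbl d = (2 * fst d + 1, 2 * snd d + 1)"

definition vadd :: "vtx \<Rightarrow> vtx \<Rightarrow> vtx" where "vadd p q = (fst p + fst q, snd p + snd q)"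

definition vsub :: "vtx \<Rightarrow> vtx \<Rightarrow> vtx" where "vsub p q = (fst p - fst q, snd p - snd q)"

definition vrot :: "vtx \<Rightarrow> vtx" where "vrot p = (- snd p, fst p)"

lemma dbl_eq_iff: "dbl p = dbl q \<longleftrightarrow> p = q" by (auto simp: dbl_def prod_eq_iff)

lemma dual_dbl_eq_iff: "dual_dbl p = dual_dbl q \<longleftrightarrow> p = q" by (auto simp: dual_dbl_def prod_eq_iff)

lemma dbl_neq_dual_dbl: "dbl p \<noteq> dual_dbl d" by (auto simp: dbl_def dual_dbl_def prod_eq_iff) presburger

lemma edge_mid_parity:
  assumes "nn_adj a b"
  shows "odd (fst (edge_mid a b)) \<noteq> odd (snd (edge_mid a b))"
  using assms unfolding nn_adj_iff by (auto simp: edge_mid_def)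

lemma dbl_neq_edge_mid: "nn_adj a b \<Longrightarrow> dbl p \<noteq> edge_mid a b"
proof
  assume "nn_adj a b" "dbl p = edge_mid a b"
  hence "edge_mid a b = (2 * fst p, 2 * snd p)" by (simp add: dbl_def)
  hence "fst (edge_mid a b) = 2 * fst p" "snd (edge_mid a b) = 2 * snd p" by simp_all
  thus False using edge_mid_parity[OF \<open>nn_adj a b\<close>] by simp
qed

lemma dual_dbl_neq_edge_mid: "nn_adj a b \<Longrightarrow> dual_dbl p \<noteq> edge_mid a b"
proof
  assume "nn_adj a b" "dual_dbl p = edge_mid a b"
  hence "edge_mid a b = (2 * fst p + 1, 2 * snd p + 1)" by (simp add: dual_dbl_def)
  hence "fst (edge_mid a b) = 2 * fst p + 1" "snd (edge_mid a b) = 2 * snd p + 1" by simp_all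
  thus False using edge_mid_parity[OF \<open>nn_adj a b\<close>] by simp
qed

lemma edge_mid_eq_imp_eq:
  assumes "nn_adj a b" "nn_adj c d" "edge_mid a b = edge_mid c d"
  shows "{a,b} = {c,d}"
proof -
  obtain s h where 1: "{a,b} = {s, lattice_step s h}" using nn_adj_lattice_stepE[OF assms(1)] .
  obtain t h' where 2: "{c,d} = {t, lattice_step t h'}" using nn_adj_lattice_stepE[OF assms(2)] .
  have m1: "edge_mid a b = edge_mid s (lattice_step s h)" and m2: "edge_mid c d = edge_mid t (lattice_step t h')"
    using 1 2 by (auto simp: doubleton_eq_iff edge_mid_def)
  obtain s1 s2 t1 t2 where A: "s = (s1,s2)" "t = (t1,t2)" by fastforce
  have E: "edge_mid s (lattice_step s h) = edge_mid t (lattice_step t h')"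
    using assms(3) m1 m2 by simp
  have "h = h'"
  proof (rule ccontr)
    assume "h \<noteq> h'"
    then show False using E by (cases h; cases h') (auto simp: edge_mid_def lattice_step_def A; presburger)+
  qed
  then have "s = t" using E by (cases h) (auto simp: edge_mid_def lattice_step_def A)
  then show ?thesis using 1 2 \<open>h = h'\<close> by simp
qed

lemma nn_adj_dbl_edge_mid:
  assumes "nn_adj p q"
  shows "nn_adj (dbl p) (edge_mid p q)" "nn_adj (edge_mid p q) (dbl q)"
  using assms unfolding nn_adj_iff by (auto simp: dbl_def edge_mid_def)

lemma complex_of_vtx_vadd: "complex_of_vtx (vadd a b) = complex_of_vtx a + complex_of_vtx b"
  by (simp add: complex_of_vtx_def vadd_def complex_eq_iff)

lemma complex_of_vtx_vsub: "complex_of_vtx (vsub a b) = complex_of_vtx a - complex_of_vtx b"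
  by (simp add: complex_of_vtx_def vsub_def complex_eq_iff)

lemma complex_of_vtx_vrot: "complex_of_vtx (vrot a) = \<i> * complex_of_vtx a"
  by (simp add: complex_of_vtx_def vrot_def complex_eq_iff)

lemma norm_dbl_minus_edge_mid:
  assumes "nn_adj a b" shows "norm (complex_of_vtx (vsub (dbl a) (edge_mid a b))) = 1"
  using assms unfolding nn_adj_iff
  by (auto simp: complex_of_vtx_def vsub_def dbl_def edge_mid_def complex_norm)

lemma dbl_reflect_edge_mid: "dbl b = vsub (edge_mid a b) (vsub (dbl a) (edge_mid a b))"
  by (simp add: dbl_def edge_mid_def vsub_def)

fun refine :: "vtx list \<Rightarrow> vtx list" where
  "refine [] = []"
| "refine [p] = [dbl p]"
| "refine (p#q#r) = dbl p # edge_mid p q # refine (q#r)"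

lemma refine_hd_last:
  "xs \<noteq> [] \<Longrightarrow> refine xs \<noteq> [] \<and> hd (refine xs) = dbl (hd xs) \<and> last (refine xs) = dbl (last xs)"
  by (induction xs rule: refine.induct) auto

lemma set_refine: "set (refine xs) = dbl ` set xs \<union> (\<lambda>(a,b). edge_mid a b) ` set (zip xs (tl xs))"
  by (induction xs rule: refine.induct) auto

lemma set_refineE:
  assumes "y \<in> set (refine xs)"
  obtains a where "a \<in> set xs" "y = dbl a" | a b where "(a, b) \<in> set (zip xs (tl xs))" "y = edge_mid a b"
  using assms unfolding set_refine by force

lemma successively_refine: "successively nn_adj xs \<Longrightarrow> successively nn_adj (refine xs)"
proof (induction xs rule: refine.induct)
  case (3 p q r)
  have "successively nn_adj (refine (q#r))" using 3 by simp
  moreover have "hd (refine (q#r)) = dbl q" using refine_hd_last[of "q#r"] by simp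
  moreover have "refine (q#r) \<noteq> []" using refine_hd_last[of "q#r"] by simp
  ultimately show ?case using nn_adj_dbl_edge_mid[of p q] 3(2)
    by (cases "refine (q#r)") auto
qed auto

lemma distinct_refine: "distinct xs \<Longrightarrow> successively nn_adj xs \<Longrightarrow> distinct (refine xs)"
proof (induction xs rule: refine.induct)
  case (3 p q r)
  have pq: "nn_adj p q" and sr: "successively nn_adj (q#r)" and pn: "p \<notin> set (q#r)"
    using "3.prems" by auto
  have "dbl p \<notin> set (refine (q#r))"
  proof
    assume "dbl p \<in> set (refine (q#r))"
    then show False
    proof (rule set_refineE)
      fix a assume "a \<in> set (q#r)" "dbl p = dbl a"
      then show False using pn by (simp add: dbl_eq_iff)
    next
      fix a b assume ab: "(a, b) \<in> set (zip (q#r) (tl (q#r)))" "dbl p = edge_mid a b"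
      then show False using dbl_neq_edge_mid[OF conjunct1[OF successively_zip_tl[OF ab(1) sr]], of p] by simp
    qed
  qed
  moreover have "edge_mid p q \<notin> set (refine (q#r))"
  proof
    assume "edge_mid p q \<in> set (refine (q#r))"
    then show False
    proof (rule set_refineE)
      fix a assume "edge_mid p q = dbl a"
      then show False using dbl_neq_edge_mid[OF pq, of a] by simp
    next
      fix a b assume ab: "(a, b) \<in> set (zip (q#r) (tl (q#r)))" "edge_mid p q = edge_mid a b"
      have "nn_adj a b" "a \<in> set (q#r)" "b \<in> set (q#r)" using successively_zip_tl[OF ab(1) sr] by auto
      moreover from this(1) have "{p, q} = {a, b}" using edge_mid_eq_imp_eq[OF pq] ab(2) by simp
      ultimately show False using pn by (auto simp: doubleton_eq_iff)
    qed
  qed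
  moreover have "dbl p \<noteq> edge_mid p q" using dbl_neq_edge_mid[OF pq] .
  ultimately show ?case using 3 by simp
qed auto

fun zigzag :: "(int \<Rightarrow> vtx) \<Rightarrow> (int \<Rightarrow> vtx) \<Rightarrow> nat \<Rightarrow> vtx list" where
  "zigzag F G 0 = []"
| "zigzag F G (Suc t) = F (int (Suc t)) # G (int t) # zigzag F G t"

lemma set_zigzag: "x \<in> set (zigzag F G t) \<longleftrightarrow> (\<exists>i. 1 \<le> i \<and> i \<le> t \<and> x = F (int i)) \<or> (\<exists>i. i < t \<and> x = G (int i))"
proof (induction t)
  case (Suc t)
  show ?case
  proof
    assume "x \<in> set (zigzag F G (Suc t))"
    then show "(\<exists>i\<ge>1. i \<le> Suc t \<and> x = F (int i)) \<or> (\<exists>i<Suc t. x = G (int i))"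
      using Suc by (auto intro: le_SucI less_SucI)
  next
    assume "(\<exists>i\<ge>1. i \<le> Suc t \<and> x = F (int i)) \<or> (\<exists>i<Suc t. x = G (int i))"
    then show "x \<in> set (zigzag F G (Suc t))"
    proof
      assume "\<exists>i\<ge>1. i \<le> Suc t \<and> x = F (int i)"
      then obtain i where "1 \<le> i" "i \<le> Suc t" "x = F (int i)" by blast
      then show ?thesis using Suc by (cases "i = Suc t") auto
    next
      assume "\<exists>i<Suc t. x = G (int i)"
      then obtain i where i: "i < Suc t" "x = G (int i)" by blast
      show ?thesis
      proof (cases "i = t")
        case False
        then have "i < t" using i by simp
        then have "x \<in> set (zigzag F G t)" using Suc.IH i by blast
        then show ?thesis by simp
      qed (use i in simp)
    qed
  qed
qed simp

lemma zigzag_suffix: "j \<le> t \<Longrightarrow> \<exists>ys. zigzag F G t = ys @ zigzag F G j"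
proof (induction t)
  case (Suc t)
  show ?case
  proof (cases "j = Suc t")
    case False
    with Suc obtain ys where "zigzag F G t = ys @ zigzag F G j" by auto
    then show ?thesis by (intro exI[of _ "F (int (Suc t)) # G (int t) # ys"]) simp
  qed (intro exI[of _ "[]"], simp)
qed simp

lemma last_zigzag: "1 \<le> t \<Longrightarrow> last (zigzag F G t) = G 0"
proof (induction t)
  case (Suc t)
  then show ?case by (cases t) auto
qed simp

lemma length_zigzag: "length (zigzag F G t) = 2 * t"
  by (induction t) auto

lemma successively_zigzag:
  assumes "\<forall>i. nn_adj (F i) (G i) \<and> nn_adj (G i) (F (i+1))"
  shows "successively nn_adj (G (int t) # zigzag F G t)"
proof (induction t)
  case (Suc t)
  have "nn_adj (F (int (Suc t))) (G (int (Suc t)))" using assms by blast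
  hence "nn_adj (G (int (Suc t))) (F (int (Suc t)))" using nn_adj_commute by blast
  moreover have "nn_adj (G (int t)) (F (int t + 1))" using assms by blast
  hence "nn_adj (F (int (Suc t))) (G (int t))" using nn_adj_commute by (simp add: add.commute)
  ultimately show ?case using Suc by simp
qed simp

lemma distinct_zigzag:
  assumes "inj F" "inj G" "\<forall>i j. F i \<noteq> G j"
  shows "distinct (G (int t) # zigzag F G t)"
proof (induction t)
  case (Suc t)
  have FG: "\<forall>i j. G j \<noteq> F i" using assms(3) by metis
  have "G (int (Suc t)) \<notin> set (zigzag F G (Suc t))"
    using assms FG by (auto simp: set_zigzag inj_eq)
  moreover have "F (int (Suc t)) \<notin> set (G (int t) # zigzag F G t)"
    using assms by (auto simp: set_zigzag inj_eq)
  ultimately show ?case using Suc by simp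
qed simp

text \<open>The dual edge is the primal edge turned by a right angle about their common midpoint.\<close>
lemma primal_of_dual_geometry:
  assumes "nn_adj d d'" "primal_of_dual d d' = {x, y}"
  shows "nn_adj x y \<and> edge_mid x y = (fst d + fst d' + 1, snd d + snd d' + 1) \<and>
    {dual_dbl d, dual_dbl d'} =
      {vadd (edge_mid x y) (vrot (vsub (dbl x) (edge_mid x y))),
       vsub (edge_mid x y) (vrot (vsub (dbl x) (edge_mid x y)))}"
proof -
  obtain d1 d2 where A: "d = (d1,d2)" by fastforce
  note defs = doubleton_eq_iff A nn_adj_def edge_mid_def dual_dbl_def vadd_def vsub_def vrot_def dbl_def
  from assms(1) consider "d' = (d1+1,d2)" | "d' = (d1 - 1,d2)" | "d' = (d1,d2+1)" | "d' = (d1,d2 - 1)"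
    unfolding nn_adj_iff A by auto
  then show ?thesis
  proof cases
    case 1
    then have "{x,y} = {(d1+1,d2),(d1+1,d2+1)}"
      using assms(2) by (simp add: primal_of_dual_def A Let_def)
    then show ?thesis using 1 by (auto simp: defs)
  next
    case 2
    then have "{x,y} = {(d1,d2),(d1,d2+1)}"
      using assms(2) by (simp add: primal_of_dual_def A Let_def)
    then show ?thesis using 2 by (auto simp: defs)
  next
    case 3
    then have "{x,y} = {(d1,d2+1),(d1+1,d2+1)}"
      using assms(2) by (simp add: primal_of_dual_def A Let_def)
    then show ?thesis using 3 by (auto simp: defs)
  next
    case 4
    then have "{x,y} = {(d1,d2),(d1+1,d2)}"
      using assms(2) by (simp add: primal_of_dual_def A Let_def)
    then show ?thesis using 4 by (auto simp: defs)
  qed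
qed

section \<open>The loop along the boundary\<close>

locale dual_cut =
  fixes w v u :: "int \<Rightarrow> vtx" and V :: "vtx set"
  assumes winj: "inj w" and wadj: "\<forall>i. nn_adj (w i) (w (i+1))"
    and pod: "\<forall>i. primal_of_dual (w i) (w (i+1)) = {v i, u i}"
    and vV: "\<forall>i. v i \<in> V" and uV: "\<forall>i. u i \<notin> V"
begin

definition mid_pt :: "int \<Rightarrow> vtx" where "mid_pt i = edge_mid (v i) (u i)"
definition dual_pt :: "int \<Rightarrow> vtx" where "dual_pt i = dual_dbl (w i)"

lemma crossing_geometry:
  "nn_adj (v i) (u i) \<and> mid_pt i = (fst (w i) + fst (w (i+1)) + 1, snd (w i) + snd (w (i+1)) + 1) \<and>
    {dual_pt i, dual_pt (i+1)} =
      {vadd (mid_pt i) (vrot (vsub (dbl (v i)) (mid_pt i))), vsub (mid_pt i) (vrot (vsub (dbl (v i)) (mid_pt i)))}"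
  using primal_of_dual_geometry[OF wadj[rule_format, of i] pod[rule_format, of i]]
  unfolding mid_pt_def dual_pt_def
    by simp

lemma nn_adj_v_u: "nn_adj (v i) (u i)" using crossing_geometry by simp

lemma nn_adj_dual_pt_mid_pt: "nn_adj (dual_pt i) (mid_pt i) \<and> nn_adj (mid_pt i) (dual_pt (i+1))"
proof -
  have F: "mid_pt i = (fst (w i) + fst (w (i+1)) + 1, snd (w i) + snd (w (i+1)) + 1)"
    using crossing_geometry by simp
  have A: "nn_adj (w i) (w (i+1))" using wadj by simp
  obtain a1 a2 where W: "w i = (a1,a2)" by fastforce
  from A show ?thesis unfolding nn_adj_iff W
    by (auto simp: F W dual_pt_def dual_dbl_def nn_adj_def)
qed

lemma mid_pt_inj: "mid_pt i = mid_pt j \<Longrightarrow> i = j"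
proof -
  assume e: "mid_pt i = mid_pt j"
  have "edge_mid (w i) (w (i+1)) = edge_mid (w j) (w (j+1))"
    using e crossing_geometry[of i] crossing_geometry[of j] by (simp add: edge_mid_def)
  then have "{w i, w (i+1)} = {w j, w (j+1)}" using edge_mid_eq_imp_eq wadj by blast
  then have "(i = j \<and> i+1 = j+1) \<or> (i = j+1 \<and> i+1 = j)"
    using winj by (auto simp: doubleton_eq_iff inj_eq)
  then show "i = j" by auto
qed

lemma mid_pt_neq_dbl: "mid_pt i \<noteq> dbl p" using dbl_neq_edge_mid[OF nn_adj_v_u] unfolding mid_pt_def by metis
lemma dual_pt_neq_dbl: "dual_pt i \<noteq> dbl p" using dbl_neq_dual_dbl unfolding dual_pt_def by metis
lemma dual_pt_neq_mid_pt: "dual_pt i \<noteq> mid_pt j"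
  using dual_dbl_neq_edge_mid[OF nn_adj_v_u] unfolding dual_pt_def mid_pt_def by metis

lemma mid_pt_eq_edge_mid_iff:
  assumes "nn_adj a b"
  shows "mid_pt i = edge_mid a b \<longleftrightarrow> {v i, u i} = {a, b}"
proof
  assume "mid_pt i = edge_mid a b"
  then show "{v i, u i} = {a, b}"
    using edge_mid_eq_imp_eq[OF nn_adj_v_u assms] unfolding mid_pt_def by simp
next
  assume "{v i, u i} = {a, b}"
  then show "mid_pt i = edge_mid a b"
    unfolding mid_pt_def by (auto simp: doubleton_eq_iff edge_mid_def add.commute)
qed

text \<open>The dual path \<open>\<Gamma>\<close>, traversed backwards in the doubled lattice from the midpoint of \<open>e\<^sub>k\<close>
  to the midpoint of \<open>e\<^sub>0\<close>.\<close>
definition dual_return :: "nat \<Rightarrow> vtx list" where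
  "dual_return k = mid_pt (int k) # zigzag dual_pt mid_pt k"

lemma set_dual_returnE:
  assumes "x \<in> set (dual_return k)"
  obtains i where "x = dual_pt i" | i where "0 \<le> i" "i \<le> int k" "x = mid_pt i"
proof -
  consider "x = mid_pt (int k)" | i where "x = dual_pt (int i)"
    | i where "i < k" "x = mid_pt (int i)"
    using assms set_zigzag[of x dual_pt mid_pt k] unfolding dual_return_def by auto
  then show ?thesis
  proof cases
    case 1
    then show ?thesis using that(2)[of "int k"] by simp
  next
    case (2 i)
    then show ?thesis using that(1) by blast
  next
    case (3 i)
    then show ?thesis using that(2)[of "int i"] by simp
  qed
qed

lemma dual_return_props:
  "distinct (dual_return k)" "successively nn_adj (dual_return k)" "hd (dual_return k) = mid_pt (int k)"
  "1 \<le> k \<Longrightarrow> last (dual_return k) = mid_pt 0" "length (dual_return k) = 2 * k + 1"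
proof -
  have "inj dual_pt" using winj unfolding dual_pt_def inj_def by (simp add: dual_dbl_eq_iff)
  moreover have "inj mid_pt" using mid_pt_inj unfolding inj_def by blast
  ultimately show "distinct (dual_return k)" unfolding dual_return_def
    by (rule distinct_zigzag) (simp add: dual_pt_neq_mid_pt)
  show "successively nn_adj (dual_return k)" unfolding dual_return_def
    by (rule successively_zigzag) (simp add: nn_adj_dual_pt_mid_pt)
  show "hd (dual_return k) = mid_pt (int k)" "length (dual_return k) = 2 * k + 1"
    by (simp_all add: dual_return_def length_zigzag)
  show "1 \<le> k \<Longrightarrow> last (dual_return k) = mid_pt 0"
    using last_zigzag[of k dual_pt mid_pt] length_zigzag[of dual_pt mid_pt k]
    by (auto simp: dual_return_def)
qed

text \<open>The Jordan curve of the separation argument: a path \<open>\<eta>\<close> in \<open>V\<close> from \<open>v\<^sub>0\<close> to \<open>v\<^sub>k\<close>,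
  closed up along \<open>\<Gamma>\<close>; both are drawn in the doubled lattice so that they only meet at the
  midpoints of \<open>e\<^sub>0\<close> and \<open>e\<^sub>k\<close>.\<close>
definition cut_loop :: "vtx list \<Rightarrow> nat \<Rightarrow> vtx list" where
  "cut_loop eta k = refine eta @ dual_return k"

context
  fixes eta :: "vtx list" and k :: nat
  assumes eta: "is_path nn_adj V (v 0) (v (int k)) eta" "distinct eta" and k: "1 \<le> k"
begin

lemma eta_edge:
  "(a, b) \<in> set (zip eta (tl eta)) \<Longrightarrow> nn_adj a b \<and> a \<in> V \<and> b \<in> V \<and> a \<in> set eta \<and> b \<in> set eta"
  using successively_zip_tl[of a b eta nn_adj] eta(1) unfolding is_path_def by blast

lemma dbl_notin_cut_loop:
  assumes "a \<notin> set eta" shows "dbl a \<notin> set (cut_loop eta k)"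
proof
  assume "dbl a \<in> set (cut_loop eta k)"
  then consider "dbl a \<in> set (refine eta)" | "dbl a \<in> set (dual_return k)" unfolding cut_loop_def
    by auto
  then show False
  proof cases
    case 1
    then show False
    proof (rule set_refineE)
      fix a' assume "a' \<in> set eta" "dbl a = dbl a'"
      then show False using assms by (simp add: dbl_eq_iff)
    next
      fix a' b' assume e: "(a', b') \<in> set (zip eta (tl eta))" "dbl a = edge_mid a' b'"
      then show False using dbl_neq_edge_mid[OF conjunct1[OF eta_edge[OF e(1)]], of a] by simp
    qed
  next
    case 2
    then show False
    proof (rule set_dual_returnE)
      fix i assume "dbl a = dual_pt i"
      then show False using dual_pt_neq_dbl[of i a] by simp
    next
      fix i assume "dbl a = mid_pt i"
      then show False using mid_pt_neq_dbl[of i a] by simp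
    qed
  qed
qed

lemma edge_mid_notin_cut_loop:
  assumes ab: "nn_adj a b" "a \<notin> set eta" "{a, b} \<notin> (\<lambda>i. {v i, u i}) ` {0..int k}"
  shows "edge_mid a b \<notin> set (cut_loop eta k)"
proof
  assume "edge_mid a b \<in> set (cut_loop eta k)"
  then consider "edge_mid a b \<in> set (refine eta)" | "edge_mid a b \<in> set (dual_return k)"
    unfolding cut_loop_def by auto
  then show False
  proof cases
    case 1
    then show False
    proof (rule set_refineE)
      fix a' assume "edge_mid a b = dbl a'"
      then show False using dbl_neq_edge_mid[OF ab(1), of a'] by argo
    next
      fix a' b' assume e: "(a', b') \<in> set (zip eta (tl eta))" "edge_mid a b = edge_mid a' b'"
      then have "{a, b} = {a', b'}" using edge_mid_eq_imp_eq[OF ab(1)] eta_edge[OF e(1)] by blast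
      then show False using eta_edge[OF e(1)] ab(2) by (auto simp: doubleton_eq_iff)
    qed
  next
    case 2
    then show False
    proof (rule set_dual_returnE)
      fix i assume "edge_mid a b = dual_pt i"
      then show False using dual_dbl_neq_edge_mid[OF ab(1), of "w i"] unfolding dual_pt_def by simp
    next
      fix i assume i: "0 \<le> i" "i \<le> int k" "edge_mid a b = mid_pt i"
      then have "{a, b} = {v i, u i}" using mid_pt_eq_edge_mid_iff[OF ab(1), of i] by auto
      moreover have "i \<in> {0..int k}" using i by simp
      ultimately show False using ab(3) by blast
    qed
  qed
qed

lemma dual_pt_notin_refine: "dual_pt i \<notin> set (refine eta)"
proof
  assume "dual_pt i \<in> set (refine eta)"
  then show False
  proof (rule set_refineE)
    fix a assume "dual_pt i = dbl a"
    then show False using dual_pt_neq_dbl by blast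
  next
    fix a b assume e: "(a, b) \<in> set (zip eta (tl eta))" "dual_pt i = edge_mid a b"
    then show False
      using dual_dbl_neq_edge_mid[OF conjunct1[OF eta_edge[OF e(1)]], of "w i"] unfolding dual_pt_def
        by simp
  qed
qed

lemma mid_pt_notin_refine: "mid_pt i \<notin> set (refine eta)"
proof
  assume "mid_pt i \<in> set (refine eta)"
  then show False
  proof (rule set_refineE)
    fix a assume "mid_pt i = dbl a"
    then show False using mid_pt_neq_dbl by blast
  next
    fix a b assume e: "(a, b) \<in> set (zip eta (tl eta))" "mid_pt i = edge_mid a b"
    then have "{v i, u i} = {a, b}" using eta_edge[OF e(1)] mid_pt_eq_edge_mid_iff by blast
    then have "u i \<in> {a, b}" by blast
    then show False using eta_edge[OF e(1)] uV by auto
  qed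
qed

lemma cut_loop_props:
  defines "X \<equiv> cut_loop eta k"
  shows "distinct X" "successively nn_adj X" "nn_adj (last X) (hd X)" "3 \<le> length X"
proof -
  have ne: "eta \<noteq> []" "hd eta = v 0" "last eta = v (int k)" "successively nn_adj eta"
    using eta(1) unfolding is_path_def by auto
  have R: "distinct (dual_return k)" "successively nn_adj (dual_return k)" "hd (dual_return k) = mid_pt (int k)"
    "last (dual_return k) = mid_pt 0" "length (dual_return k) = 2 * k + 1"
    using dual_return_props k by auto
  have fe: "refine eta \<noteq> []" "hd (refine eta) = dbl (v 0)" "last (refine eta) = dbl (v (int k))"
    using refine_hd_last[OF ne(1)] ne by auto
  have "x \<notin> set (refine eta)" if "x \<in> set (dual_return k)" for x
    using that by (rule set_dual_returnE) (use dual_pt_notin_refine mid_pt_notin_refine in blast)+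
  then have "set (refine eta) \<inter> set (dual_return k) = {}" by blast
  then show "distinct X" unfolding X_def cut_loop_def
    using distinct_refine[OF eta(2) ne(4)] R(1) by simp
  show "successively nn_adj X" unfolding X_def cut_loop_def
    using successively_refine[OF ne(4)] R fe nn_adj_dbl_edge_mid(1)[OF nn_adj_v_u[of "int k"]]
    by (simp add: successively_append_iff mid_pt_def)
  have "dual_return k \<noteq> []" using R(5) by auto
  then have "last X = mid_pt 0" "hd X = dbl (v 0)" unfolding X_def cut_loop_def
    using R(4) fe by simp_all
  then show "nn_adj (last X) (hd X)"
    using nn_adj_commute nn_adj_dbl_edge_mid(1)[OF nn_adj_v_u[of 0]] unfolding mid_pt_def by metis
  show "3 \<le> length X" unfolding X_def cut_loop_def using R(5) k fe(1) by (cases "refine eta") auto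
qed

lemma cut_loop_split:
  assumes "1 \<le> n" "n < k"
  obtains ys zs where "cut_loop eta k = ys @ [dual_pt (int n + 1), mid_pt (int n), dual_pt (int n)] @ zs"
proof -
  obtain ys where ys: "zigzag dual_pt mid_pt k = ys @ zigzag dual_pt mid_pt (Suc n)"
    using zigzag_suffix assms by (metis Suc_leI)
  obtain n' where "n = Suc n'" using assms by (cases n) auto
  then show ?thesis
    using that[of "refine eta @ mid_pt (int k) # ys" "mid_pt (int n') # zigzag dual_pt mid_pt n'"]
    by (simp add: cut_loop_def dual_return_def ys)
qed

lemma refine_disjoint_cut_loop:
  assumes L: "successively nn_adj L" "set L \<inter> set eta = {}" "set L \<subseteq> V \<or> set L \<subseteq> -V"
  shows "set (refine L) \<inter> set (cut_loop eta k) = {}"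
proof -
  have "edge_mid a b \<notin> set (cut_loop eta k)" if "(a, b) \<in> set (zip L (tl L))" for a b
  proof (rule edge_mid_notin_cut_loop)
    have "nn_adj a b" "a \<in> set L" "b \<in> set L" using successively_zip_tl[OF that L(1)] by auto
    then show "nn_adj a b" "a \<notin> set eta" "{a, b} \<notin> (\<lambda>i. {v i, u i}) ` {0..int k}"
      using L(2,3) vV uV by (auto simp: doubleton_eq_iff)
  qed
  moreover have "dbl a \<notin> set (cut_loop eta k)" if "a \<in> set L" for a
    using dbl_notin_cut_loop that L(2) by blast
  ultimately show ?thesis unfolding set_refine by auto
qed

text \<open>At the midpoint of \<open>e\<^sub>n\<close> the loop crosses the edge \<open>{v\<^sub>n, u\<^sub>n}\<close> transversally.\<close>
lemma cut_loop_separates: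
  assumes n: "1 \<le> n" "n < k" and vn: "v (int n) \<notin> set eta"
  shows "\<not> connected_component (- path_image (polygon (cut_loop eta k)))
           (complex_of_vtx (dbl (v (int n)))) (complex_of_vtx (dbl (u (int n))))"
proof -
  define X where "X = cut_loop eta k"
  note X = cut_loop_props[folded X_def]
  have Xne: "X \<noteq> []" using X(4) by auto
  obtain ys zs where Xsplit: "X = ys @ [dual_pt (int n + 1), mid_pt (int n), dual_pt (int n)] @ zs"
    using cut_loop_split[OF n] unfolding X_def by blast
  define M where "M = complex_of_vtx (mid_pt (int n))"
  define \<phi> where "\<phi> = vsub (dbl (v (int n))) (mid_pt (int n))"
  define f where "f = complex_of_vtx \<phi>"
  have nf: "norm f = 1" unfolding f_def \<phi>_def mid_pt_def
    by (rule norm_dbl_minus_edge_mid[OF nn_adj_v_u])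
  have Mf: "M + f = complex_of_vtx (dbl (v (int n)))"
    unfolding M_def f_def \<phi>_def complex_of_vtx_vsub by simp
  have Mmf: "M - f = complex_of_vtx (dbl (u (int n)))"
    unfolding M_def f_def \<phi>_def dbl_reflect_edge_mid[of "u (int n)" "v (int n)"] mid_pt_def complex_of_vtx_vsub
    by simp
  have ends: "{complex_of_vtx (dual_pt (int n + 1)), complex_of_vtx (dual_pt (int n))} = {M + \<i> * f, M - \<i> * f}"
  proof -
    have "{dual_pt (int n), dual_pt (int n + 1)} = {vadd (mid_pt (int n)) (vrot \<phi>), vsub (mid_pt (int n)) (vrot \<phi>)}"
      using crossing_geometry[of "int n"] unfolding \<phi>_def by simp
    then have "complex_of_vtx ` {dual_pt (int n), dual_pt (int n + 1)} =
        complex_of_vtx ` {vadd (mid_pt (int n)) (vrot \<phi>), vsub (mid_pt (int n)) (vrot \<phi>)}"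
      by simp
    then show ?thesis
      by (simp add: complex_of_vtx_vadd complex_of_vtx_vsub complex_of_vtx_vrot M_def f_def insert_commute)
  qed
  have line: "z \<in> path_image (polygon X) \<longleftrightarrow> inner f (z - M) = 0" if "dist M z < 1" for z
    using polygon_straight_near_vertex[OF X(1-3) Xsplit nf] ends that unfolding M_def by blast
  have "u (int n) \<notin> set eta" using uV eta(1) unfolding is_path_def by blast
  then have "dbl (v (int n)) \<notin> set X" "dbl (u (int n)) \<notin> set X"
    using dbl_notin_cut_loop vn unfolding X_def by blast+
  then have "closed_segment (M + f) M \<inter> path_image (polygon X) \<subseteq> {M}"
    "closed_segment (M - f) M \<inter> path_image (polygon X) \<subseteq> {M}"
    using segment_to_polygon_vertex[OF X(2,3) Xne nn_adj_dbl_edge_mid(1)[OF nn_adj_v_u[of "int n"]]]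
      segment_to_polygon_vertex[OF X(2,3) Xne
        nn_adj_commute[THEN iffD1, OF nn_adj_dbl_edge_mid(2)[OF nn_adj_v_u[of "int n"]]]]
    unfolding Mf Mmf by (simp_all add: M_def mid_pt_def)
  then have "\<not> connected_component (- path_image (polygon X)) (M + f) (M - f)"
    using crossing_loop_not_connected[OF simple_loop_polygon[OF X(1,4,2,3)] nf line] by blast
  then show ?thesis using Mf Mmf unfolding X_def by simp
qed

lemma refined_path_connected:
  assumes L: "successively nn_adj L" "L \<noteq> []" "set L \<inter> set eta = {}" "set L \<subseteq> V \<or> set L \<subseteq> -V"
  shows "connected_component (- path_image (polygon (cut_loop eta k)))
           (complex_of_vtx (dbl (hd L))) (complex_of_vtx (dbl (last L)))"
proof -
  note X = cut_loop_props
  have "cut_loop eta k \<noteq> []" using X(4) by auto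
  then show ?thesis
    using polyline_avoiding_polygon_connected[OF X(2,3) _ successively_refine[OF L(1)]]
      refine_disjoint_cut_loop[OF L(1,3,4)] refine_hd_last[OF L(2)] by auto
qed

lemma boundary_edge_connected:
  assumes "k < j" "v (int j) \<notin> set eta"
  shows "connected_component (- path_image (polygon (cut_loop eta k)))
           (complex_of_vtx (dbl (v (int j)))) (complex_of_vtx (dbl (u (int j))))"
proof -
  let ?L = "[dbl (v (int j)), mid_pt (int j), dbl (u (int j))]"
  note X = cut_loop_props
  have "{v (int j), u (int j)} \<noteq> {v i, u i}" if "i \<in> {0..int k}" for i
  proof
    assume "{v (int j), u (int j)} = {v i, u i}"
    then have "mid_pt i = mid_pt (int j)"
      using mid_pt_eq_edge_mid_iff[OF nn_adj_v_u[of "int j"], of i] by (simp add: mid_pt_def)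
    then show False using mid_pt_inj that assms(1) by force
  qed
  then have "{v (int j), u (int j)} \<notin> (\<lambda>i. {v i, u i}) ` {0..int k}" by blast
  moreover have "u (int j) \<notin> set eta" using uV eta(1) unfolding is_path_def by blast
  ultimately have "set ?L \<inter> set (cut_loop eta k) = {}"
    using edge_mid_notin_cut_loop[OF nn_adj_v_u assms(2)] dbl_notin_cut_loop assms(2)
    unfolding mid_pt_def by auto
  moreover have "successively nn_adj ?L"
    using nn_adj_dbl_edge_mid[OF nn_adj_v_u[of "int j"]] by (simp add: mid_pt_def)
  moreover have "cut_loop eta k \<noteq> []" using X(4) by auto
  ultimately show ?thesis
    using polyline_avoiding_polygon_connected[OF X(2,3), of ?L] by simp
qed

text \<open>Planarity: a path in \<open>V\<close> from \<open>v\<^sub>n\<close> to \<open>v\<^sub>j\<close>, the edge \<open>e\<^sub>j\<close> and a path in the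
  complement from \<open>u\<^sub>j\<close> back to \<open>u\<^sub>n\<close> would connect the two sides of the loop at \<open>e\<^sub>n\<close>.\<close>
lemma boundary_path_meets:
  assumes n: "1 \<le> n" "n < k" and j: "k < j"
    and q: "is_path nn_adj V (v (int n)) (v (int j)) q"
    and r: "is_path nn_adj (UNIV - V) (u (int n)) (u (int j)) r"
  shows "set q \<inter> set eta \<noteq> {}"
proof
  assume dis: "set q \<inter> set eta = {}"
  let ?cc = "connected_component (- path_image (polygon (cut_loop eta k)))"
  have q': "q \<noteq> []" "hd q = v (int n)" "last q = v (int j)" "set q \<subseteq> V" "successively nn_adj q"
    and r': "r \<noteq> []" "hd r = u (int n)" "last r = u (int j)" "set r \<subseteq> -V" "successively nn_adj r"
    using q r unfolding is_path_def by auto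
  have "set r \<inter> set eta = {}" using r'(4) eta(1) unfolding is_path_def by auto
  then have "?cc (complex_of_vtx (dbl (u (int n)))) (complex_of_vtx (dbl (u (int j))))"
    using refined_path_connected[OF r'(5,1)] r' by simp
  moreover have "?cc (complex_of_vtx (dbl (v (int n)))) (complex_of_vtx (dbl (v (int j))))"
    using refined_path_connected[OF q'(5,1) dis] q' by simp
  moreover have "v (int j) \<notin> set eta" using dis q' by (metis disjoint_iff last_in_set)
  then have "?cc (complex_of_vtx (dbl (v (int j)))) (complex_of_vtx (dbl (u (int j))))"
    using boundary_edge_connected[OF j] by blast
  ultimately have "?cc (complex_of_vtx (dbl (v (int n)))) (complex_of_vtx (dbl (u (int n))))"
    using connected_component_trans connected_component_sym by metis
  moreover have "v (int n) \<notin> set eta" using dis q' by (metis disjoint_iff hd_in_set)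
  ultimately show False using cut_loop_separates[OF n] by blast
qed

end

end

section \<open>Passage times\<close>

lemma path_time_Cons2: "path_time \<omega> (a # b # xs) = \<omega> {a,b} + path_time \<omega> (b # xs)"
  by (simp add: path_time_def)

lemma path_time_single: "path_time \<omega> [a] = 0"
  by (simp add: path_time_def)

lemma path_time_append:
  fixes xs ys :: "vtx list" and \<omega> :: "vtx set \<Rightarrow> real"
  shows "xs \<noteq> [] \<Longrightarrow>
    path_time \<omega> (xs @ tl ys) = path_time \<omega> xs + (if ys = [] then 0 else path_time \<omega> (last xs # tl ys))"
proof (induction xs rule: induct_list012)
  case (2 x)
  then show ?case by (cases ys) (simp_all add: path_time_single)
next
  case (3 x y zs)
  then show ?case by (simp add: path_time_Cons2)
qed simp

lemma path_time_join:
  fixes xs ys :: "vtx list" and \<omega> :: "vtx set \<Rightarrow> real"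
  assumes "xs \<noteq> []" "ys \<noteq> []" "last xs = hd ys"
  shows "path_time \<omega> (xs @ tl ys) = path_time \<omega> xs + path_time \<omega> ys"
  using path_time_append[OF assms(1), where ys = ys and \<omega> = \<omega>] assms(2,3) by (cases ys) auto

lemma is_path_join:
  "is_path nn_adj V x y xs \<Longrightarrow> is_path nn_adj V y z ys \<Longrightarrow> is_path nn_adj V x z (xs @ tl ys)"
  unfolding is_path_def
  by (cases ys) (auto simp: successively_append_iff successively_Cons)

lemma is_path_rev: "is_path nn_adj V x y xs \<Longrightarrow> is_path nn_adj V y x (rev xs)"
  using nn_adj_commute unfolding is_path_def by (auto simp: hd_rev last_rev)

lemma is_path_split:
  assumes "is_path nn_adj V x y xs" "c \<in> set xs"
  obtains as bs where "is_path nn_adj V x c (as @ [c])" "is_path nn_adj V c y (c # bs)"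
    "path_time \<omega> xs = path_time \<omega> (as @ [c]) + path_time \<omega> (c # bs)"
proof -
  obtain as bs where xs: "xs = as @ c # bs" using assms(2) by (meson split_list)
  have "is_path nn_adj V x c (as @ [c])" "is_path nn_adj V c y (c # bs)"
    using assms(1) unfolding is_path_def xs
    by (auto simp: successively_append_iff hd_append split: if_splits)
  moreover have "path_time \<omega> xs = path_time \<omega> (as @ [c]) + path_time \<omega> (c # bs)"
    using path_time_join[of "as @ [c]" "c # bs"] xs by simp
  ultimately show ?thesis using that by blast
qed

context
  fixes V :: "vtx set" and \<omega> :: "vtx set \<Rightarrow> real"
  assumes nonneg: "\<forall>e \<in> edges_in V. \<omega> e \<ge> 0"
begin

lemma path_time_nonneg:
  "set xs \<subseteq> V \<Longrightarrow> successively nn_adj xs \<Longrightarrow> 0 \<le> path_time \<omega> xs"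
proof (induction xs rule: induct_list012)
  case (3 x y zs)
  have "nn_adj x y" using 3 by simp
  then have "{x,y} \<in> nn_edges" unfolding nn_edges_def by blast
  then have "{x,y} \<in> edges_in V" using 3 by (auto simp: edges_in_def)
  then have "0 \<le> \<omega> {x,y}" using nonneg by blast
  moreover have "0 \<le> path_time \<omega> (y # zs)" using 3 by simp
  ultimately show ?case by (simp add: path_time_Cons2)
qed (simp_all add: path_time_def)

lemma pass_time_bdd_below: "bdd_below {path_time \<omega> xs | xs. is_path nn_adj V x y xs}"
  unfolding bdd_below_def using path_time_nonneg unfolding is_path_def by blast

lemma pass_time_le: "is_path nn_adj V x y xs \<Longrightarrow> pass_time V \<omega> x y \<le> path_time \<omega> xs"
  unfolding pass_time_def by (rule cInf_lower[OF _ pass_time_bdd_below]) blast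

lemma pass_time_nonneg: "is_path nn_adj V x y xs \<Longrightarrow> 0 \<le> pass_time V \<omega> x y"
  unfolding pass_time_def by (rule cInf_greatest) (auto intro: path_time_nonneg simp: is_path_def)

lemma pass_time_approx:
  assumes "is_path nn_adj V x y xs0" "0 < e"
  obtains xs where "is_path nn_adj V x y xs" "path_time \<omega> xs < pass_time V \<omega> x y + e"
proof -
  have ne: "{path_time \<omega> xs | xs. is_path nn_adj V x y xs} \<noteq> {}" using assms(1) by blast
  have "Inf {path_time \<omega> xs | xs. is_path nn_adj V x y xs} < pass_time V \<omega> x y + e"
    using assms(2) unfolding pass_time_def by simp
  then show ?thesis using cInf_lessD[OF ne] that by blast
qed

lemma pass_time_triangle:
  assumes "is_path nn_adj V x c p1" "is_path nn_adj V c y p2"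
  shows "pass_time V \<omega> x y \<le> pass_time V \<omega> x c + pass_time V \<omega> c y"
proof (rule field_le_epsilon)
  fix e :: real assume e: "0 < e"
  obtain q1 where q1: "is_path nn_adj V x c q1" "path_time \<omega> q1 < pass_time V \<omega> x c + e/2"
    using pass_time_approx[OF assms(1)] e by (metis half_gt_zero)
  obtain q2 where q2: "is_path nn_adj V c y q2" "path_time \<omega> q2 < pass_time V \<omega> c y + e/2"
    using pass_time_approx[OF assms(2)] e by (metis half_gt_zero)
  have "pass_time V \<omega> x y \<le> path_time \<omega> (q1 @ tl q2)"
    by (rule pass_time_le[OF is_path_join[OF q1(1) q2(1)]])
  also have "\<dots> = path_time \<omega> q1 + path_time \<omega> q2"
    using q1(1) q2(1) by (intro path_time_join) (auto simp: is_path_def)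
  finally show "pass_time V \<omega> x y \<le> pass_time V \<omega> x c + pass_time V \<omega> c y + e"
    using q1(2) q2(2) by linarith
qed

text \<open>Cutting out a loop \<open>c \<dots> c\<close> does not increase the passage time.\<close>
lemma distinct_path_shortcut:
  "is_path nn_adj V x y xs \<Longrightarrow> \<exists>ys. is_path nn_adj V x y ys \<and> distinct ys \<and> path_time \<omega> ys \<le> path_time \<omega> xs"
proof (induction "length xs" arbitrary: xs rule: less_induct)
  case less
  show ?case
  proof (cases "distinct xs")
    case False
    then obtain as c bs cs where xs: "xs = as @ [c] @ bs @ [c] @ cs"
      using not_distinct_decomp by blast
    define zs where "zs = as @ [c] @ cs"
    have P: "set xs \<subseteq> V" "successively nn_adj xs" using less.prems unfolding is_path_def by auto
    have s1: "successively nn_adj (as @ [c])" and s2: "successively nn_adj (c # bs @ [c] @ cs)"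
      using P(2) successively_append_iff[of nn_adj "as @ [c]" "bs @ [c] @ cs"]
        successively_append_iff[of nn_adj as "c # bs @ [c] @ cs"] unfolding xs by auto
    have s: "successively nn_adj (as @ [c])" "successively nn_adj (c # bs @ [c])" "successively nn_adj (c # cs)"
      using s1 s2 successively_append_iff[of nn_adj "c # bs @ [c]" cs]
        successively_append_iff[of nn_adj "c # bs" "c # cs"] by auto
    have zpath: "is_path nn_adj V x y zs"
      using less.prems s unfolding is_path_def zs_def xs
      by (auto simp: successively_append_iff hd_append split: if_splits)
    have "path_time \<omega> xs = path_time \<omega> (as @ [c]) + path_time \<omega> (c # bs @ [c]) + path_time \<omega> (c # cs)"
      using path_time_join[of "as @ [c]" "c # bs @ [c] @ cs"] path_time_join[of "c # bs @ [c]" "c # cs"]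
      unfolding xs by simp
    moreover have "path_time \<omega> zs = path_time \<omega> (as @ [c]) + path_time \<omega> (c # cs)"
      using path_time_join[of "as @ [c]" "c # cs"] unfolding zs_def by simp
    moreover have "0 \<le> path_time \<omega> (c # bs @ [c])"
      using P(1) s(2) unfolding xs by (intro path_time_nonneg) auto
    moreover have "length zs < length xs" unfolding zs_def xs by simp
    ultimately show ?thesis using less.hyps zpath by fastforce
  qed (use less.prems in blast)
qed

text \<open>Exchange the tails of \<open>\<eta>\<close> and of a near-optimal path from \<open>z\<close> to \<open>t\<close> at a common vertex.\<close>
lemma pass_time_exchange:
  assumes eta: "is_path nn_adj V b a eta" "path_time \<omega> eta \<le> pass_time V \<omega> b a + d"
    and meet: "\<forall>p. is_path nn_adj V z t p \<longrightarrow> set p \<inter> set eta \<noteq> {}"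
    and ex: "is_path nn_adj V z t p0"
  shows "pass_time V \<omega> z a + pass_time V \<omega> b t \<le> pass_time V \<omega> z t + pass_time V \<omega> b a + d"
proof (rule field_le_epsilon)
  fix e :: real assume e: "0 < e"
  obtain p where p: "is_path nn_adj V z t p" "path_time \<omega> p < pass_time V \<omega> z t + e"
    using pass_time_approx[OF ex e] by blast
  obtain c where c: "c \<in> set p" "c \<in> set eta" using meet p(1) by blast
  obtain p1 p2 where P: "is_path nn_adj V z c p1" "is_path nn_adj V c t p2" "path_time \<omega> p = path_time \<omega> p1 + path_time \<omega> p2"
    using is_path_split[OF p(1) c(1)] by metis
  obtain e1 e2 where E: "is_path nn_adj V b c e1" "is_path nn_adj V c a e2" "path_time \<omega> eta = path_time \<omega> e1 + path_time \<omega> e2"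
    using is_path_split[OF eta(1) c(2)] by metis
  have "pass_time V \<omega> z a \<le> path_time \<omega> (p1 @ tl e2)"
    by (rule pass_time_le[OF is_path_join[OF P(1) E(2)]])
  also have "\<dots> = path_time \<omega> p1 + path_time \<omega> e2"
    using P(1) E(2) by (intro path_time_join) (auto simp: is_path_def)
  finally have 1: "pass_time V \<omega> z a \<le> path_time \<omega> p1 + path_time \<omega> e2" .
  have "pass_time V \<omega> b t \<le> path_time \<omega> (e1 @ tl p2)"
    by (rule pass_time_le[OF is_path_join[OF E(1) P(2)]])
  also have "\<dots> = path_time \<omega> e1 + path_time \<omega> p2"
    using E(1) P(2) by (intro path_time_join) (auto simp: is_path_def)
  finally have 2: "pass_time V \<omega> b t \<le> path_time \<omega> e1 + path_time \<omega> p2" .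
  show "pass_time V \<omega> z a + pass_time V \<omega> b t \<le> pass_time V \<omega> z t + pass_time V \<omega> b a + d + e"
    using 1 2 P(3) E(3) p(2) eta(2) by linarith
qed

end

section \<open>A convergence criterion\<close>

lemma tail_Inf_tendsto:
  fixes g :: "nat \<Rightarrow> real"
  assumes bd: "\<And>n. \<bar>g n\<bar> \<le> B"
  obtains L where "(\<lambda>N. Inf (g ` {N..})) \<longlonglongrightarrow> L" "\<And>N. Inf (g ` {N..}) \<le> L"
proof -
  have bdd: "bdd_below (g ` {N..})" for N
    using bd unfolding bdd_below_def by (metis abs_le_D2 imageE minus_le_iff)
  have "incseq (\<lambda>N. Inf (g ` {N..}))"
    unfolding incseq_def by (intro allI impI cInf_superset_mono bdd) auto
  moreover have "\<forall>N. Inf (g ` {N..}) \<le> B"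
    using cInf_lower[OF _ bdd] bd by (metis abs_le_D1 atLeast_iff image_eqI order.refl order.trans)
  ultimately obtain L where "(\<lambda>N. Inf (g ` {N..})) \<longlonglongrightarrow> L" "\<forall>N. Inf (g ` {N..}) \<le> L"
    by (rule incseq_convergent)
  then show ?thesis using that by blast
qed

lemma tail_Inf_squeeze:
  fixes g :: "nat \<Rightarrow> real"
  assumes bdd: "\<And>N. bdd_below (g ` {N..})" and L: "(\<lambda>N. Inf (g ` {N..})) \<longlonglongrightarrow> L"
    and upper: "\<And>r. 0 < r \<Longrightarrow> eventually (\<lambda>m. g m < L + r) sequentially"
  shows "g \<longlonglongrightarrow> L"
proof (rule LIMSEQ_I)
  fix r :: real assume r: "0 < r"
  obtain N1 where N1: "\<And>n. N1 \<le> n \<Longrightarrow> norm (Inf (g ` {n..}) - L) < r" using LIMSEQ_D[OF L r] by blast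
  obtain N2 where N2: "\<And>m. N2 \<le> m \<Longrightarrow> g m < L + r" using upper[OF r] eventually_sequentially by auto
  have "norm (g m - L) < r" if "max N1 N2 \<le> m" for m
  proof -
    have "Inf (g ` {N1..}) \<le> g m" using that by (intro cInf_lower[OF _ bdd]) auto
    then have "L - r < g m" using N1[of N1] by (auto simp: abs_less_iff)
    then show ?thesis using N2[of m] that by (simp add: abs_less_iff)
  qed
  then show "\<exists>no. \<forall>m\<ge>no. norm (g m - L) < r" by blast
qed

text \<open>With \<open>L\<close> the limit of the tail infima, the first alternative bounds \<open>g m\<close> by a later
  tail infimum, the second by a value \<open>g n\<^sub>0\<close> close to the infimum of the tail from 1;
  in both cases \<open>g m \<le> L + o(1)\<close>.\<close>
lemma convergent_by_alternative:
  fixes g :: "nat \<Rightarrow> real"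
  assumes bd: "\<And>n. \<bar>g n\<bar> \<le> B"
    and alt: "\<And>m. 2 \<le> m \<Longrightarrow> (\<forall>j>m. g m \<le> g j + 1 / (real m + 1)) \<or>
                                 (\<forall>n. 1 \<le> n \<longrightarrow> n < m \<longrightarrow> g m \<le> g n + 1 / (real m + 1))"
  shows "convergent g"
proof -
  define u where "u N = Inf (g ` {N..})" for N
  obtain L where L: "u \<longlonglongrightarrow> L" "\<And>N. u N \<le> L"
  proof (rule tail_Inf_tendsto[OF bd])
    fix L assume "(\<lambda>N. Inf (g ` {N..})) \<longlonglongrightarrow> L" "\<And>N. Inf (g ` {N..}) \<le> L"
    with that[of L] show thesis by (simp add: u_def[abs_def])
  qed
  have bdd: "bdd_below (g ` {N..})" for N
    using bd unfolding bdd_below_def by (metis abs_le_D2 imageE minus_le_iff)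
  have "eventually (\<lambda>m. g m < L + r) sequentially" if r: "0 < r" for r
  proof -
    obtain n0 where n0: "n0 \<ge> 1" "g n0 < u 1 + r/2"
    proof -
      have "Inf (g ` {1..}) < u 1 + r/2" using r unfolding u_def by simp
      from cInf_lessD[OF _ this] obtain y where "y \<in> g ` {1..}" "y < u 1 + r/2" by auto
      then show thesis using that by auto
    qed
    obtain N2 where N2: "inverse (real (Suc N2)) < r/2"
      using reals_Archimedean r by (metis half_gt_zero)
    have "g m < L + r" if m: "max (max (n0 + 1) N2) 2 \<le> m" for m
    proof -
      have "1 / (real m + 1) \<le> inverse (real (Suc N2))"
        using m by (simp add: divide_inverse le_imp_inverse_le)
      then have em: "1 / (real m + 1) < r/2" using N2 by linarith
      have "2 \<le> m" using m by simp
      from alt[OF this] show "g m < L + r"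
      proof
        assume A: "\<forall>j>m. g m \<le> g j + 1 / (real m + 1)"
        have "g m - 1 / (real m + 1) \<le> g j" if "m + 1 \<le> j" for j
          using A that by (simp add: algebra_simps)
        then have "g m - 1 / (real m + 1) \<le> u (m+1)"
          unfolding u_def by (intro cInf_greatest) auto
        then show "g m < L + r" using L(2)[of "m+1"] em r by linarith
      next
        assume "\<forall>n. 1 \<le> n \<longrightarrow> n < m \<longrightarrow> g m \<le> g n + 1 / (real m + 1)"
        then have "g m \<le> g n0 + 1 / (real m + 1)" using n0(1) m by auto
        then show "g m < L + r" using n0(2) L(2)[of 1] em by linarith
      qed
    qed
    then show ?thesis unfolding eventually_sequentially by blast
  qed
  then have "g \<longlonglongrightarrow> L" using tail_Inf_squeeze[OF bdd L(1)[unfolded u_def[abs_def]]] by blast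
  then show ?thesis unfolding convergent_def by blast
qed

section \<open>Convergence along the boundary\<close>

lemma primal_of_dual_doubleton: "\<exists>a b. primal_of_dual d d' = {a, b}"
  unfolding primal_of_dual_def Let_def by auto

lemma gamma_edge_partner:
  assumes "\<forall>i. \<not> gamma_edge w i \<subseteq> V" "\<forall>i. v i \<in> V \<and> v i \<in> gamma_edge w i"
  obtains u where "\<forall>i. primal_of_dual (w i) (w (i+1)) = {v i, u i}" "\<forall>i. u i \<notin> V"
proof -
  have "\<exists>x. primal_of_dual (w i) (w (i+1)) = {v i, x} \<and> x \<notin> V" for i
  proof -
    obtain a b where ab: "gamma_edge w i = {a, b}"
      using primal_of_dual_doubleton unfolding gamma_edge_def by blast
    define x where "x = (if v i = a then b else a)"
    have "gamma_edge w i = {v i, x}" "x \<notin> V"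
      using ab assms[rule_format, of i] unfolding x_def by auto
    then show ?thesis unfolding gamma_edge_def by blast
  qed
  then show ?thesis using that by metis
qed

locale first_passage = dual_cut w v u V
  for w v u :: "int \<Rightarrow> vtx" and V :: "vtx set" +
  fixes \<omega> :: "vtx set \<Rightarrow> real"
  assumes \<omega>_nonneg: "\<forall>e \<in> edges_in V. \<omega> e \<ge> 0"
    and V_conn: "connected_in nn_adj V" and C_conn: "connected_in nn_adj (UNIV - V)"
begin

lemma path_in_V: "p \<in> V \<Longrightarrow> q \<in> V \<Longrightarrow> \<exists>xs. is_path nn_adj V p q xs"
  using V_conn unfolding connected_in_def by blast

definition near_geodesic :: "nat \<Rightarrow> vtx list" where
  "near_geodesic m = (SOME e. is_path nn_adj V (v 0) (v (int m)) e \<and> distinct e \<and>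
     path_time \<omega> e \<le> pass_time V \<omega> (v 0) (v (int m)) + 1 / (real m + 1))"

lemma near_geodesic:
  "is_path nn_adj V (v 0) (v (int m)) (near_geodesic m)" "distinct (near_geodesic m)"
  "path_time \<omega> (near_geodesic m) \<le> pass_time V \<omega> (v 0) (v (int m)) + 1 / (real m + 1)"
proof -
  have "\<exists>e. is_path nn_adj V (v 0) (v (int m)) e \<and> distinct e \<and>
      path_time \<omega> e \<le> pass_time V \<omega> (v 0) (v (int m)) + 1 / (real m + 1)"
  proof -
    obtain p0 where p0: "is_path nn_adj V (v 0) (v (int m)) p0" using path_in_V vV by blast
    have "0 < 1 / (real m + 1)" by simp
    then obtain p where p: "is_path nn_adj V (v 0) (v (int m)) p"
        "path_time \<omega> p < pass_time V \<omega> (v 0) (v (int m)) + 1 / (real m + 1)"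
      by (rule pass_time_approx[OF \<omega>_nonneg p0])
    obtain e where "is_path nn_adj V (v 0) (v (int m)) e" "distinct e" "path_time \<omega> e \<le> path_time \<omega> p"
      using distinct_path_shortcut[OF \<omega>_nonneg p(1)] by blast
    then show ?thesis using p(2) by (intro exI[of _ e]) auto
  qed
  then show "is_path nn_adj V (v 0) (v (int m)) (near_geodesic m)" "distinct (near_geodesic m)"
    "path_time \<omega> (near_geodesic m) \<le> pass_time V \<omega> (v 0) (v (int m)) + 1 / (real m + 1)"
    unfolding near_geodesic_def by (metis (mono_tags, lifting) someI_ex)+
qed

lemma near_geodesic_separates:
  assumes "1 \<le> n" "n < m" "m < j"
    and p: "is_path nn_adj V z (v (int n)) p" and p': "is_path nn_adj V z (v (int j)) p'"
  shows "set p \<inter> set (near_geodesic m) \<noteq> {} \<or> set p' \<inter> set (near_geodesic m) \<noteq> {}"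
proof (rule ccontr)
  assume dis: "\<not> ?thesis"
  have q: "is_path nn_adj V (v (int n)) (v (int j)) (rev p @ tl p')"
    by (rule is_path_join[OF is_path_rev[OF p] p'])
  have "set (tl p') \<subseteq> set p'" by (cases p') auto
  then have "set (rev p @ tl p') \<inter> set (near_geodesic m) = {}" using dis by auto
  moreover obtain r where "is_path nn_adj (UNIV - V) (u (int n)) (u (int j)) r"
    using C_conn uV unfolding connected_in_def by blast
  ultimately show False
    using boundary_path_meets[OF near_geodesic(1,2) _ assms(1-3) q] assms(1,2) by auto
qed

definition busemann_seq :: "vtx \<Rightarrow> vtx \<Rightarrow> nat \<Rightarrow> real" where
  "busemann_seq x y n = pass_time V \<omega> x (v (int n)) - pass_time V \<omega> y (v (int n))"

lemma abs_busemann_seq_le: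
  assumes "x \<in> V" "y \<in> V"
  shows "\<bar>busemann_seq x y n\<bar> \<le> pass_time V \<omega> x y + pass_time V \<omega> y x"
proof -
  obtain pxy pyx px py where p: "is_path nn_adj V x y pxy" "is_path nn_adj V y x pyx"
    "is_path nn_adj V x (v (int n)) px" "is_path nn_adj V y (v (int n)) py"
    using path_in_V assms vV by metis
  have "pass_time V \<omega> x (v (int n)) \<le> pass_time V \<omega> x y + pass_time V \<omega> y (v (int n))"
    by (rule pass_time_triangle[OF \<omega>_nonneg p(1,4)])
  moreover have "pass_time V \<omega> y (v (int n)) \<le> pass_time V \<omega> y x + pass_time V \<omega> x (v (int n))"
    by (rule pass_time_triangle[OF \<omega>_nonneg p(2,3)])
  moreover have "0 \<le> pass_time V \<omega> x y" "0 \<le> pass_time V \<omega> y x"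
    using pass_time_nonneg[OF \<omega>_nonneg p(1)] pass_time_nonneg[OF \<omega>_nonneg p(2)] by auto
  ultimately show ?thesis unfolding busemann_seq_def by linarith
qed

text \<open>For each \<open>m\<close>, the near-geodesic to \<open>v\<^sub>m\<close> is met either by all paths from \<open>z\<close> to later
  boundary vertices or by all paths from \<open>z\<close> to earlier ones.\<close>
lemma busemann_seq_alternative:
  assumes z: "z \<in> V" and m: "2 \<le> m"
  defines "g \<equiv> busemann_seq z (v 0)"
  shows "(\<forall>j>m. g m \<le> g j + 1 / (real m + 1)) \<or> (\<forall>n. 1 \<le> n \<longrightarrow> n < m \<longrightarrow> g m \<le> g n + 1 / (real m + 1))"
proof -
  have exchange: "g m \<le> g t + 1 / (real m + 1)"
    if "\<forall>p. is_path nn_adj V z (v (int t)) p \<longrightarrow> set p \<inter> set (near_geodesic m) \<noteq> {}" for t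
  proof -
    obtain p0 where "is_path nn_adj V z (v (int t)) p0" using path_in_V z vV by blast
    from pass_time_exchange[OF \<omega>_nonneg near_geodesic(1,3) that this]
    show ?thesis unfolding g_def busemann_seq_def by linarith
  qed
  show ?thesis
  proof (cases "\<exists>j>m. \<exists>p'. is_path nn_adj V z (v (int j)) p' \<and> set p' \<inter> set (near_geodesic m) = {}")
    case True
    then obtain j p' where "m < j" "is_path nn_adj V z (v (int j)) p'" "set p' \<inter> set (near_geodesic m) = {}"
      by blast
    then show ?thesis using near_geodesic_separates exchange by blast
  next
    case False
    then show ?thesis using exchange by blast
  qed
qed

lemma convergent_busemann_seq:
  assumes "x \<in> V" "y \<in> V"
  shows "convergent (busemann_seq x y)"
proof -
  have base: "convergent (busemann_seq z (v 0))" if "z \<in> V" for z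
    using convergent_by_alternative[OF abs_busemann_seq_le[OF that] busemann_seq_alternative[OF that]] vV
    by blast
  have "busemann_seq x y = (\<lambda>n. busemann_seq x (v 0) n - busemann_seq y (v 0) n)"
    by (simp add: busemann_seq_def fun_eq_iff)
  then show ?thesis using convergent_diff base assms by metis
qed

end

theorem theorem1p1:
  fixes V :: "(int \<times> int) set"
    and w :: "int \<Rightarrow> int \<times> int"
    and v :: "int \<Rightarrow> int \<times> int"
    and \<omega> :: "(int \<times> int) set \<Rightarrow> real"
    and x y :: "int \<times> int"
  assumes V_inf: "infinite V" and V_conn: "connected_in nn_adj V"
    and C_inf: "infinite (UNIV - V)" and C_conn: "connected_in nn_adj (UNIV - V)"
    and \<Gamma>: "dual_path w"
    and V_comp: "is_component (cut_adj w) V"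
    and C_comp: "is_component (cut_adj w) (UNIV - V)"
    and V_edges: "\<forall>i. \<not> gamma_edge w i \<subseteq> V"
    and v_def: "\<forall>i. v i \<in> V \<and> v i \<in> gamma_edge w i"
    and \<omega>_nonneg: "\<forall>e \<in> edges_in V. \<omega> e \<ge> 0"
    and xy: "x \<in> V" "y \<in> V"
  shows "\<exists>B::real. (\<lambda>n. pass_time V \<omega> x (v (int n)) - pass_time V \<omega> y (v (int n)))
                     \<longlonglongrightarrow> B"
proof -
  obtain u where "\<forall>i. primal_of_dual (w i) (w (i+1)) = {v i, u i}" "\<forall>i. u i \<notin> V"
    using gamma_edge_partner[OF V_edges v_def] by blast
  then interpret first_passage w v u V \<omega>
    using \<Gamma> v_def \<omega>_nonneg V_conn C_conn by unfold_locales (auto simp: dual_path_def)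
  show ?thesis
    using convergent_busemann_seq[OF xy] unfolding convergent_def busemann_seq_def .
qed

end
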